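(* Let $\Sigma$ be an extended vocabulary which contains a unary set predicate name $\mathsf{SET}$ and does not contain the binary relation name $\mathsf{ancestor}$. There exists a non-deterministic overlay $\mathrm{CMSO}[2]$-transduction $\tau$ with the following property. Let $(U,\mathcal{S})$ be a set system, represented as the $\{\mathsf{SET}\}$-structure $\mathbb{S}$, and let $T$ be the laminar tree induced by $(U,\mathcal{S})$ (with $L(T)=U$). Let $\mathbb{A}$ be any $\Sigma$-structure with $\mathbb{S}\sqsubseteq\mathbb{A}$. Then $\tau(\mathbb{A})$ is non-empty, and every output in $\tau(\mathbb{A})$ is equal to $\mathbb{A}\sqcup\mathbb{T}$ for some $\{\mathsf{ancestor}\}$-structure $\mathbb{T}$ representing $T$.
   Context: Structures. An extended vocabulary is a finite set of symbols, each a relation name or a set predicate name, with an arity. A $\Sigma$-structure $\mathbb{A}$ consists of a finite universe $U_{\mathbb{A}}$, for each relation name $R\in\Sigma$ of arity $k$ a $k$-ary relation $R_{\mathbb{A}}$ on $U_{\mathbb{A}}$, and for each set predicate name $P\in\Sigma$ of arity $k$ a $k$-ary relation $P_{\mathbb{A}}$ on subsets of $U_{\mathbb{A}}$. For a $\Sigma$-structure $\mathbb{A}$ and a $\Gamma$-structure $\mathbb{B}$: $\mathbb{A}\sqsubseteq\mathbb{B}$ means $\Sigma\subseteq\Gamma$, $U_{\mathbb{A}}\subseteq U_{\mathbb{B}}$ and $Q_{\mathbb{A}}=Q_{\mathbb{B}}$ for all $Q\in\Sigma$; $\mathbb{A}\sqcup\mathbb{B}$ is the $(\Sigma\cup\Gamma)$-structure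 with universe $U_{\mathbb{A}}\cup U_{\mathbb{B}}$ interpreting symbols of $\Sigma\setminus\Gamma$ as in $\mathbb{A}$, of $\Gamma\setminus\Sigma$ as in $\mathbb{B}$, and of $\Sigma\cap\Gamma$ as $Q_{\mathbb{A}}\cup Q_{\mathbb{B}}$. Logic and transductions. $\mathrm{CMSO}[2]$ is monadic second-order logic over such structures (quantification over elements and subsets of the universe; atomic formulas from equality, membership, the relations and set predicates) extended with a unary set predicate true of a set iff its size is even. A $\Sigma$-to-$\Gamma$ transduction is a set $\tau$ of pairs (input $\Sigma$-structure, output $\Gamma$-structure); $\tau(\mathbb{A})$ is the set of outputs on input $\mathbb{A}$; $\tau$ is an overlay transduction if $\mathbb{A}\sqsubseteq\mathbb{B}$ for all $(\mathbb{A},\mathbb{B})\in\tau$. A $\mathrm{CMSO}[2]$-transduction is a finite composition of atomic transductions: filtering (keep the input unchanged iff it satisfies a fixed sentence); universe restriction (restrict universe and all relations/predicates to the elements satisfying a fixed formula with one free first-order variable); interpretation (same universe, each output symbol $Q$ interpreted as the tuples satisfying a fixed formula with $\mathrm{ar}(Q)$ free variables, first-order for relation names, monadic for set predicate names); copying (for fixed $k$, add $k$ fresh copies of every element and binary relations $\mathsf{copy}_i$, $i\in[k]$, relating each original element to its $i$-th copy, keeping original interpretations); colouring (add a new unary relation interpreted as an arbitrary subset of the universe, every choice yielding an output). It is non-deterministic if it uses colouring. Set systems. A set system is a pair $(U,\mathcal{S})$ with $U$ finite and $\mathcal{S}$ a family of subsets of $U$ such that $\emptyset\notin\mathcal{S}$,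 $U\in\mathcal{S}$, and $\{a\}\in\mathcal{S}$ for every $a\in U$; it is represented as the $\{\mathsf{SET}\}$-structure with universe $U$ and unary set predicate $\mathsf{SET}$ interpreted as $\mathcal{S}$. Two sets overlap if they intersect and neither contains the other. A member of $\mathcal{S}$ is strong if it overlaps no member of $\mathcal{S}$; the family $\mathcal{S}_!$ of strong members is laminar (no two members overlap). The laminar tree induced by $(U,\mathcal{S})$ is the rooted tree whose nodes are the members of $\mathcal{S}_!$, with root $U$, where $X$ is a child of $Y$ iff $X\subsetneq Y$ and no member of $\mathcal{S}_!$ lies strictly between them; its leaves are the singletons, identified with the elements of $U$, so $L(T)=U$. A rooted tree $T$ with $L(T)=U$ is represented by an $\{\mathsf{ancestor}\}$-structure with universe $V(T)$ (containing $U$ as the leaves) in which $\mathsf{ancestor}(u,v)$ holds iff $u$ is an ancestor of $v$ (every node is its own ancestor). *)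

theory Defs
  imports Main
begin

datatype kind = RelK | SetK

text \<open>A symbol is (kind, name, arity): kind RelK = relation name, SetK = set predicate name.\<close>
type_synonym sym = "kind \<times> string \<times> nat"

text \<open>Elements of universes are natural numbers (an infinite supply, so that fresh
copies always exist). Tuples of a relation are lists of element values, tuples of a
set predicate are lists of set values.\<close>
datatype val = Elt nat | SetV "nat set"

record struct =
  voc :: "sym set"
  univ :: "nat set"
  interp :: "sym \<Rightarrow> val list set"

definition wf_struct :: "sym set \<Rightarrow> struct \<Rightarrow> bool" where
  "wf_struct Voc A \<longleftrightarrow> voc A = Voc \<and> finite Voc \<and> finite (univ A)
     \<and> (\<forall>s. s \<notin> Voc \<longrightarrow> interp A s = {})
     \<and> (\<forall>k n a t. (k, n, a) \<in> Voc \<and> t \<in> interp A (k, n, a) \<longrightarrow>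
           length t = a \<and>
           (\<forall>x\<in>set t. (case k of
               RelK \<Rightarrow> (\<exists>e\<in>univ A. x = Elt e)
             | SetK \<Rightarrow> (\<exists>X. X \<subseteq> univ A \<and> x = SetV X))))"

definition sqsub :: "struct \<Rightarrow> struct \<Rightarrow> bool" where
  "sqsub A B \<longleftrightarrow> voc A \<subseteq> voc B \<and> univ A \<subseteq> univ B \<and> (\<forall>Q\<in>voc A. interp A Q = interp B Q)"

definition join :: "struct \<Rightarrow> struct \<Rightarrow> struct" where
  "join A B = \<lparr> voc = voc A \<union> voc B, univ = univ A \<union> univ B,
     interp = (\<lambda>Q. if Q \<in> voc A \<and> Q \<in> voc B then interp A Q \<union> interp B Q
                 else if Q \<in> voc A then interp A Q
                 else if Q \<in> voc B then interp B Q else {}) \<rparr>"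

text \<open>First-order variables and set variables are both indexed by nat (separate namespaces).\<close>
datatype form =
    FEq nat nat
  | FMem nat nat
  | FRel string "nat list"
  | FSetP string "nat list"
  | FEven nat
  | FNot form
  | FOr form form
  | FEx1 nat form
  | FEx2 nat form

fun sat :: "struct \<Rightarrow> (nat \<Rightarrow> nat) \<Rightarrow> (nat \<Rightarrow> nat set) \<Rightarrow> form \<Rightarrow> bool" where
  "sat A v w (FEq x y) = (v x = v y)"
| "sat A v w (FMem x X) = (v x \<in> w X)"
| "sat A v w (FRel r xs) = (map (\<lambda>x. Elt (v x)) xs \<in> interp A (RelK, r, length xs))"
| "sat A v w (FSetP p Xs) = (map (\<lambda>X. SetV (w X)) Xs \<in> interp A (SetK, p, length Xs))"
| "sat A v w (FEven X) = even (card (w X))"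
| "sat A v w (FNot f) = (\<not> sat A v w f)"
| "sat A v w (FOr f g) = (sat A v w f \<or> sat A v w g)"
| "sat A v w (FEx1 x f) = (\<exists>a\<in>univ A. sat A (v(x := a)) w f)"
| "sat A v w (FEx2 X f) = (\<exists>S. S \<subseteq> univ A \<and> sat A v (w(X := S)) f)"

fun fv1 :: "form \<Rightarrow> nat set" where
  "fv1 (FEq x y) = {x, y}"
| "fv1 (FMem x X) = {x}"
| "fv1 (FRel r xs) = set xs"
| "fv1 (FSetP p Xs) = {}"
| "fv1 (FEven X) = {}"
| "fv1 (FNot f) = fv1 f"
| "fv1 (FOr f g) = fv1 f \<union> fv1 g"
| "fv1 (FEx1 x f) = fv1 f - {x}"
| "fv1 (FEx2 X f) = fv1 f"

fun fv2 :: "form \<Rightarrow> nat set" where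
  "fv2 (FEq x y) = {}"
| "fv2 (FMem x X) = {X}"
| "fv2 (FRel r xs) = {}"
| "fv2 (FSetP p Xs) = set Xs"
| "fv2 (FEven X) = {X}"
| "fv2 (FNot f) = fv2 f"
| "fv2 (FOr f g) = fv2 f \<union> fv2 g"
| "fv2 (FEx1 x f) = fv2 f"
| "fv2 (FEx2 X f) = fv2 f - {X}"

datatype atomic =
    Filter form
  | Restrict form
  | Interp "(sym \<times> form) list"
  | Copy "string list"
  | Colour string

fun wf_atomic :: "atomic \<Rightarrow> bool" where
  "wf_atomic (Filter f) = (fv1 f = {} \<and> fv2 f = {})"
| "wf_atomic (Restrict f) = (fv1 f \<subseteq> {0} \<and> fv2 f = {})"
| "wf_atomic (Interp l) = (distinct (map fst l) \<and>
     (\<forall>((k, n, a), f) \<in> set l. case k of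
         RelK \<Rightarrow> fv1 f \<subseteq> {..<a} \<and> fv2 f = {}
       | SetK \<Rightarrow> fv1 f = {} \<and> fv2 f \<subseteq> {..<a}))"
| "wf_atomic (Copy ns) = distinct ns"
| "wf_atomic (Colour c) = True"

fun interp_sym :: "struct \<Rightarrow> sym \<Rightarrow> form \<Rightarrow> val list set" where
  "interp_sym A (RelK, n, a) f =
     {map Elt xs | xs. length xs = a \<and> set xs \<subseteq> univ A \<and> sat A (\<lambda>i. xs ! i) (\<lambda>_. {}) f}"
| "interp_sym A (SetK, n, a) f =
     {map SetV Xs | Xs. length Xs = a \<and> (\<forall>X\<in>set Xs. X \<subseteq> univ A) \<and> sat A (\<lambda>_. 0) (\<lambda>i. Xs ! i) f}"

fun step :: "atomic \<Rightarrow> struct \<Rightarrow> struct \<Rightarrow> bool" where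
  "step (Filter f) A B = (B = A \<and> sat A (\<lambda>_. 0) (\<lambda>_. {}) f)"
| "step (Restrict f) A B =
     (let U' = {a \<in> univ A. sat A (\<lambda>_. a) (\<lambda>_. {}) f} in
      B = \<lparr> voc = voc A, univ = U',
            interp = (\<lambda>s. {t \<in> interp A s. \<forall>x\<in>set t. case x of Elt e \<Rightarrow> e \<in> U' | SetV X \<Rightarrow> X \<subseteq> U'}) \<rparr>)"
| "step (Interp l) A B =
     (B = \<lparr> voc = set (map fst l), univ = univ A,
            interp = (\<lambda>s. case map_of l s of None \<Rightarrow> {} | Some f \<Rightarrow> interp_sym A s f) \<rparr>)"
| "step (Copy ns) A B =
     (\<exists>f :: nat \<Rightarrow> nat \<Rightarrow> nat.
        inj_on (\<lambda>(i, a). f i a) ({..<length ns} \<times> univ A)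
      \<and> (\<forall>i<length ns. \<forall>a\<in>univ A. f i a \<notin> univ A)
      \<and> B = \<lparr> voc = voc A \<union> {(RelK, ns ! i, 2) | i. i < length ns},
              univ = univ A \<union> {f i a | i a. i < length ns \<and> a \<in> univ A},
              interp = (\<lambda>s. {[Elt a, Elt (f i a)] | a i. i < length ns \<and> s = (RelK, ns ! i, 2) \<and> a \<in> univ A}
                           \<union> (if s \<in> {(RelK, ns ! i, 2) | i. i < length ns} then {} else interp A s)) \<rparr>)"
| "step (Colour c) A B =
     (\<exists>C. C \<subseteq> univ A \<and>
        B = \<lparr> voc = voc A \<union> {(RelK, c, 1)}, univ = univ A,
              interp = (\<lambda>s. if s = (RelK, c, 1) then {[Elt a] | a. a \<in> C} else interp A s) \<rparr>)"

fun run :: "atomic list \<Rightarrow> struct \<Rightarrow> struct \<Rightarrow> bool" where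
  "run [] A B = (B = A)"
| "run (t # ts) A B = (\<exists>C. step t A C \<and> run ts C B)"

definition wf_trans :: "atomic list \<Rightarrow> bool" where
  "wf_trans ts \<longleftrightarrow> (\<forall>t\<in>set ts. wf_atomic t)"

definition trans_sem :: "sym set \<Rightarrow> atomic list \<Rightarrow> struct \<Rightarrow> struct \<Rightarrow> bool" where
  "trans_sem Voc ts A B \<longleftrightarrow> wf_struct Voc A \<and> run ts A B"

definition overlay :: "sym set \<Rightarrow> atomic list \<Rightarrow> bool" where
  "overlay Voc ts \<longleftrightarrow> (\<forall>A B. trans_sem Voc ts A B \<longrightarrow> sqsub A B)"

definition SET_sym :: sym where "SET_sym = (SetK, ''SET'', 1)"
definition ancestor_sym :: sym where "ancestor_sym = (RelK, ''ancestor'', 2)"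

definition set_system :: "nat set \<Rightarrow> nat set set \<Rightarrow> bool" where
  "set_system U SS \<longleftrightarrow> finite U \<and> SS \<subseteq> Pow U \<and> {} \<notin> SS \<and> U \<in> SS \<and> (\<forall>a\<in>U. {a} \<in> SS)"

definition set_system_struct :: "nat set \<Rightarrow> nat set set \<Rightarrow> struct" where
  "set_system_struct U SS = \<lparr> voc = {SET_sym}, univ = U,
     interp = (\<lambda>s. if s = SET_sym then {[SetV X] | X. X \<in> SS} else {}) \<rparr>"

definition overlap :: "nat set \<Rightarrow> nat set \<Rightarrow> bool" where
  "overlap X Y \<longleftrightarrow> X \<inter> Y \<noteq> {} \<and> \<not> X \<subseteq> Y \<and> \<not> Y \<subseteq> X"

definition strong :: "nat set set \<Rightarrow> nat set set" where
  "strong SS = {X \<in> SS. \<forall>Y\<in>SS. \<not> overlap X Y}"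

definition lam_child :: "nat set set \<Rightarrow> nat set \<Rightarrow> nat set \<Rightarrow> bool" where
  "lam_child SS X Y \<longleftrightarrow> X \<in> strong SS \<and> Y \<in> strong SS \<and> X \<subset> Y
     \<and> \<not> (\<exists>Z\<in>strong SS. X \<subset> Z \<and> Z \<subset> Y)"

definition lam_ancestor :: "nat set set \<Rightarrow> nat set \<Rightarrow> nat set \<Rightarrow> bool" where
  "lam_ancestor SS X Y \<longleftrightarrow> (X, Y) \<in> {(P, C). lam_child SS C P}\<^sup>*"

definition represents_laminar_tree :: "nat set \<Rightarrow> nat set set \<Rightarrow> struct \<Rightarrow> bool" where
  "represents_laminar_tree U SS T \<longleftrightarrow> wf_struct {ancestor_sym} T \<and>
     (\<exists>h. bij_betw h (strong SS) (univ T) \<and> (\<forall>a\<in>U. h {a} = a) \<and>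
          interp T ancestor_sym =
            {[Elt (h X), Elt (h Y)] | X Y. X \<in> strong SS \<and> Y \<in> strong SS \<and> lam_ancestor SS X Y})"

end

(* Every internal node of the laminar tree needs an element of its own, and the transduction
   provides one by guessing, for each internal node X, a leaf r marking X and taking a copy of r.
   To make marking definable, the input is coloured with three colour classes, and a set Z gets the
   label (|Z \<inter> C1|, |Z \<inter> C2|, |Z \<inter> C3|) mod 2 in GF(2)^3, so the label of an internal node is
   the sum of the labels of its children. Three bits make every nonzero label the sum of a unit
   label and a nonzero non-unit label, which lets an induction on the tree colour the leaves so that
   every internal node has a child with a unit label and a child without one. A leaf r marks X if
   the path from X down to r starts with a non-unit child and then stays on unit-labelled nodes.
   Every internal node is marked by some leaf, and a leaf can only mark the parent of the lowest
   non-unit node containing it, so one marker per internal node gives an injective representation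
   of the tree whose ancestor relation is CMSO[2]-definable as inclusion of the represented sets. *)

theory Submission
  imports Defs "HOL-Library.Z2" "HOL-Library.Product_Plus"
begin

section \<open>Laminar trees of set systems\<close>

lemma strong_subset_members: "strong SS \<subseteq> SS"
  by (auto simp: strong_def)

lemma strong_comparable:
  assumes "X \<in> strong SS" "Y \<in> strong SS" "X \<inter> Y \<noteq> {}"
  shows "X \<subseteq> Y \<or> Y \<subseteq> X"
  using assms unfolding strong_def overlap_def by blast

lemma lam_children_disjoint:
  assumes "lam_child SS C1 X" "lam_child SS C2 X" "C1 \<noteq> C2"
  shows "C1 \<inter> C2 = {}"
proof (rule ccontr)
  assume "C1 \<inter> C2 \<noteq> {}"
  moreover have "C1 \<in> strong SS" "C2 \<in> strong SS"
    using assms by (auto simp: lam_child_def)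
  ultimately have "C1 \<subseteq> C2 \<or> C2 \<subseteq> C1"
    using strong_comparable by blast
  moreover have "\<not> C1 \<subset> C2" "\<not> C2 \<subset> C1"
    using assms(1,2) unfolding lam_child_def by blast+
  ultimately show False
    using assms(3) by blast
qed

context
  fixes U :: "nat set" and SS :: "nat set set"
  assumes set_system: "set_system U SS"
begin

lemma strong_subset_univ: "X \<in> strong SS \<Longrightarrow> X \<subseteq> U"
  using set_system by (auto simp: set_system_def strong_def)

lemma strong_nonempty: "X \<in> strong SS \<Longrightarrow> X \<noteq> {}"
  using set_system by (auto simp: set_system_def strong_def)

lemma strong_finite: "X \<in> strong SS \<Longrightarrow> finite X"
  using set_system finite_subset[OF strong_subset_univ] by (auto simp: set_system_def)

lemma singleton_strong: "a \<in> U \<Longrightarrow> {a} \<in> strong SS"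
  using set_system by (auto simp: set_system_def strong_def overlap_def)

lemma univ_strong: "U \<in> strong SS"
  using set_system by (auto simp: set_system_def strong_def overlap_def)

lemma finite_strong: "finite (strong SS)"
proof (rule finite_subset)
  show "strong SS \<subseteq> Pow U"
    using strong_subset_univ by blast
  show "finite (Pow U)"
    using set_system by (simp add: set_system_def)
qed

lemma strong_card_less: "X \<in> strong SS \<Longrightarrow> Z \<subset> X \<Longrightarrow> card Z < card X"
  by (simp add: psubset_card_mono strong_finite)

lemma lam_child_above:
  assumes X: "X \<in> strong SS" and Z: "Z \<in> strong SS" "Z \<subset> X"
  shows "\<exists>C. lam_child SS C X \<and> Z \<subseteq> C"
proof -
  let ?F = "{W \<in> strong SS. Z \<subseteq> W \<and> W \<subset> X}"
  have "Z \<in> ?F"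
    using Z by blast
  have "finite ?F"
    by (rule finite_subset[OF _ finite_strong]) blast
  then obtain C where C: "C \<in> ?F" and maximal: "\<forall>W\<in>?F. C \<subseteq> W \<longrightarrow> C = W"
    using finite_has_maximal2[OF \<open>finite ?F\<close> \<open>Z \<in> ?F\<close>] by blast
  have "\<not> (\<exists>W\<in>strong SS. C \<subset> W \<and> W \<subset> X)"
    using C maximal by blast
  then have "lam_child SS C X"
    using C X by (simp add: lam_child_def)
  with C show ?thesis by blast
qed

lemma lam_child_containing:
  assumes "X \<in> strong SS" "\<not> is_singleton X" "a \<in> X"
  shows "\<exists>C. lam_child SS C X \<and> a \<in> C"
proof -
  have "{a} \<in> strong SS" "{a} \<subset> X"
    using assms strong_subset_univ singleton_strong by (auto simp: is_singleton_def)
  then show ?thesis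
    using lam_child_above[OF assms(1)] by blast
qed

lemma lam_children_cover:
  assumes "X \<in> strong SS" "\<not> is_singleton X"
  shows "\<Union>{C. lam_child SS C X} = X"
  using lam_child_containing[OF assms] by (auto simp: lam_child_def)

lemma two_lam_children:
  assumes "X \<in> strong SS" "\<not> is_singleton X"
  obtains C1 C2 where "lam_child SS C1 X" "lam_child SS C2 X" "C1 \<noteq> C2"
proof -
  obtain a where "a \<in> X"
    using strong_nonempty[OF assms(1)] by blast
  then obtain C1 where C1: "lam_child SS C1 X" "a \<in> C1"
    using lam_child_containing[OF assms] by blast
  then obtain b where "b \<in> X" "b \<notin> C1"
    unfolding lam_child_def by blast
  then obtain C2 where "lam_child SS C2 X" "b \<in> C2"
    using lam_child_containing[OF assms] by blast
  with C1 \<open>b \<notin> C1\<close> show ?thesis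
    using that by blast
qed

lemma finite_lam_children: "finite {C. lam_child SS C X}"
  using finite_strong by (rule finite_subset[rotated]) (auto simp: lam_child_def)

lemma lam_ancestor_iff_subset:
  assumes "X \<in> strong SS" "Y \<in> strong SS"
  shows "lam_ancestor SS X Y \<longleftrightarrow> Y \<subseteq> X"
proof
  show "lam_ancestor SS X Y \<Longrightarrow> Y \<subseteq> X"
    unfolding lam_ancestor_def
    by (induction rule: rtrancl_induct) (auto simp: lam_child_def)
  show "Y \<subseteq> X \<Longrightarrow> lam_ancestor SS X Y"
    using assms(1)
  proof (induction "card X" arbitrary: X rule: less_induct)
    case less
    show ?case
    proof (cases "Y = X")
      case True
      then show ?thesis by (simp add: lam_ancestor_def)
    next
      case False
      then obtain C where C: "lam_child SS C X" "Y \<subseteq> C"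
        using lam_child_above[OF less.prems(2) assms(2)] less.prems(1) by blast
      then have "C \<in> strong SS" "card C < card X"
        using less.prems(2) strong_card_less by (auto simp: lam_child_def)
      then have "lam_ancestor SS C Y"
        using less.hyps C(2) by blast
      with C(1) show ?thesis
        unfolding lam_ancestor_def by (simp add: converse_rtrancl_into_rtrancl)
    qed
  qed
qed

end

section \<open>Parity labels\<close>

type_synonym label = "bit \<times> bit \<times> bit"

definition unit_labels :: "label set" where
  "unit_labels = {(1, 0, 0), (0, 1, 0), (0, 0, 1)}"

lemma bit_add_self: "x + x = (0 :: bit)"
  by (cases x) simp_all

lemma label_add_self [simp]: "x + x = (0 :: label)"
proof -
  obtain a b c where "x = (a, b, c)"
    by (cases x)
  then show ?thesis
    by (simp add: zero_prod_def bit_add_self)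
qed

lemma label_add_eq_0_iff: "x + y = (0 :: label) \<longleftrightarrow> x = y"
proof
  assume "x + y = 0"
  then have "x + y + y = y"
    by simp
  then show "x = y"
    by (simp add: add.assoc)
qed simp

lemma unit_plus_nonunit:
  fixes t :: label
  assumes "t \<noteq> 0"
  shows "\<exists>a\<in>unit_labels. a + t \<noteq> 0 \<and> a + t \<notin> unit_labels"
proof -
  obtain t1 t2 t3 where t: "t = (t1, t2, t3)"
    by (cases t)
  show ?thesis
    using assms unfolding unit_labels_def t
    by (cases t1; cases t2; cases t3) (simp_all add: zero_prod_def)
qed

lemma sum_const_label: "(\<Sum>c\<in>K. x) \<in> {0, x :: label}"
  by (induction K rule: infinite_finite_induct) auto

lemma label_assignment:
  fixes t :: label
  assumes K: "finite K" "c1 \<in> K" "c2 \<in> K" "c1 \<noteq> c2" and t: "t \<noteq> 0"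
  obtains f where "\<forall>c\<in>K. f c \<noteq> 0" "f c1 \<in> unit_labels" "f c2 \<notin> unit_labels" "(\<Sum>c\<in>K. f c) = t"
proof -
  have "(1, 0, 0) \<noteq> (0 :: label)" "(0, 1, 0) \<noteq> (0 :: label)" "((1, 0, 0) :: label) \<noteq> (0, 1, 0)"
    by (simp_all add: zero_prod_def)
  then obtain x :: label where x: "x \<noteq> 0" "x \<noteq> t"
    by metis
  define K' where "K' = K - {c1, c2}"
  define s where "s = (\<Sum>c\<in>K'. x)"
  have "t + s \<noteq> 0"
    using sum_const_label[of x K'] x t by (auto simp: s_def label_add_eq_0_iff)
  then obtain a where a: "a \<in> unit_labels" "a + (t + s) \<noteq> 0" "a + (t + s) \<notin> unit_labels"
    using unit_plus_nonunit by blast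
  define f where "f c = (if c = c1 then a else if c = c2 then a + (t + s) else x)" for c
  have "K = insert c1 (insert c2 K')" "c1 \<notin> insert c2 K'" "c2 \<notin> K'" "finite K'"
    using K by (auto simp: K'_def)
  then have "(\<Sum>c\<in>K. f c) = f c1 + (f c2 + (\<Sum>c\<in>K'. f c))"
    by simp
  also have "(\<Sum>c\<in>K'. f c) = s"
    unfolding s_def K'_def f_def by (rule sum.cong) auto
  finally have "(\<Sum>c\<in>K. f c) = t"
    using K(4) by (simp add: f_def add.assoc[symmetric])
  moreover have "\<forall>c\<in>K. f c \<noteq> 0"
    using a x by (auto simp: f_def unit_labels_def zero_prod_def)
  ultimately show ?thesis
    using that a K(4) by (simp add: f_def)
qed

definition splits_children :: "nat set set \<Rightarrow> (nat set \<Rightarrow> bool) \<Rightarrow> nat set \<Rightarrow> bool" where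
  "splits_children SS P Y \<longleftrightarrow> (\<forall>X\<in>strong SS. X \<subseteq> Y \<longrightarrow> \<not> is_singleton X \<longrightarrow>
     (\<exists>C. lam_child SS C X \<and> P C) \<and> (\<exists>C. lam_child SS C X \<and> \<not> P C))"

abbreviation unit_labelled :: "(nat \<Rightarrow> label) \<Rightarrow> nat set \<Rightarrow> bool" where
  "unit_labelled \<kappa> Z \<equiv> (\<Sum>a\<in>Z. \<kappa> a) \<in> unit_labels"

lemma glue_on_disjoint:
  assumes "pairwise disjnt K"
  obtains \<kappa> :: "'a \<Rightarrow> 'b" where "\<And>c a. c \<in> K \<Longrightarrow> a \<in> c \<Longrightarrow> \<kappa> a = G c a"
proof
  fix c a assume "c \<in> K" "a \<in> c"
  then have "(SOME c. c \<in> K \<and> a \<in> c) = c"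
    using assms by (intro some_equality) (auto simp: pairwise_def disjnt_def)
  then show "G (SOME c. c \<in> K \<and> a \<in> c) a = G c a"
    by simp
qed

lemma glued_colouring:
  assumes set_system: "set_system U SS" and Y: "Y \<in> strong SS" "\<not> is_singleton Y"
    and splits: "\<And>c. lam_child SS c Y \<Longrightarrow> splits_children SS (unit_labelled (G c)) c"
    and unit: "lam_child SS c1 Y" "unit_labelled (G c1) c1"
    and nonunit: "lam_child SS c2 Y" "\<not> unit_labelled (G c2) c2"
  obtains \<kappa> where "(\<Sum>a\<in>Y. \<kappa> a) = (\<Sum>c\<in>{C. lam_child SS C Y}. \<Sum>a\<in>c. G c a)"
    "splits_children SS (unit_labelled \<kappa>) Y"
proof -
  define K where "K = {C. lam_child SS C Y}"
  have K_strong: "c \<in> strong SS" "c \<subset> Y" if "c \<in> K" for c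
    using that by (auto simp: K_def lam_child_def)
  have "pairwise disjnt K"
    unfolding K_def pairwise_def disjnt_def using lam_children_disjoint by blast
  then obtain \<kappa> where \<kappa>: "\<And>c a. c \<in> K \<Longrightarrow> a \<in> c \<Longrightarrow> \<kappa> a = G c a"
    using glue_on_disjoint[of K G] by blast
  have local: "(\<Sum>a\<in>Z. \<kappa> a) = (\<Sum>a\<in>Z. G c a)" if "c \<in> K" "Z \<subseteq> c" for c Z
    using that \<kappa> by (intro sum.cong) auto
  have "(\<Sum>a\<in>Y. \<kappa> a) = (\<Sum>a\<in>\<Union>K. \<kappa> a)"
    using lam_children_cover[OF set_system Y] by (simp add: K_def)
  also have "\<dots> = (\<Sum>c\<in>K. \<Sum>a\<in>c. \<kappa> a)"
    using \<open>pairwise disjnt K\<close> strong_finite[OF set_system] K_strong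
    by (subst sum.Union_disjoint) (auto simp: pairwise_def disjnt_def)
  also have "\<dots> = (\<Sum>c\<in>K. \<Sum>a\<in>c. G c a)"
    using local by simp
  finally have "(\<Sum>a\<in>Y. \<kappa> a) = (\<Sum>c\<in>K. \<Sum>a\<in>c. G c a)" .
  moreover have "splits_children SS (unit_labelled \<kappa>) Y"
    unfolding splits_children_def
  proof (intro ballI impI)
    fix X assume X: "X \<in> strong SS" "X \<subseteq> Y" "\<not> is_singleton X"
    show "(\<exists>C. lam_child SS C X \<and> unit_labelled \<kappa> C) \<and> (\<exists>C. lam_child SS C X \<and> \<not> unit_labelled \<kappa> C)"
    proof (cases "X = Y")
      case True
      then show ?thesis
        using unit nonunit local by (auto simp: K_def)
    next
      case False
      then obtain c where c: "lam_child SS c Y" "X \<subseteq> c"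
        using lam_child_above[OF set_system Y(1) X(1)] X(2) by blast
      then have "c \<in> K"
        by (simp add: K_def)
      have "C \<subseteq> c" if "lam_child SS C X" for C
        using that c(2) by (auto simp: lam_child_def)
      then show ?thesis
        using splits[OF c(1)] X c(2) local[OF \<open>c \<in> K\<close>]
        unfolding splits_children_def by metis
    qed
  qed
  ultimately show ?thesis
    using that unfolding K_def by blast
qed

lemma colouring_exists:
  assumes set_system: "set_system U SS" and "Y \<in> strong SS" "t \<noteq> 0"
  shows "\<exists>\<kappa>. (\<Sum>a\<in>Y. \<kappa> a) = t \<and> splits_children SS (unit_labelled \<kappa>) Y"
  using assms(2,3)
proof (induction "card Y" arbitrary: Y t rule: less_induct)
  case less
  show ?case
  proof (cases "is_singleton Y")
    case True
    then obtain b where b: "Y = {b}"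
      by (auto simp: is_singleton_def)
    have "splits_children SS P Y" for P
      unfolding splits_children_def b
      using strong_nonempty[OF set_system] by (auto dest: subset_singletonD)
    then show ?thesis
      using b by (intro exI[of _ "\<lambda>_. t"]) simp
  next
    case False
    define K where "K = {C. lam_child SS C Y}"
    obtain c1 c2 where c12: "c1 \<in> K" "c2 \<in> K" "c1 \<noteq> c2"
      using two_lam_children[OF set_system less.prems(1) False] unfolding K_def by blast
    obtain f where f: "\<forall>c\<in>K. f c \<noteq> 0" "f c1 \<in> unit_labels" "f c2 \<notin> unit_labels"
      "(\<Sum>c\<in>K. f c) = t"
      using label_assignment[OF finite_lam_children[OF set_system] c12[unfolded K_def] less.prems(2)]
      unfolding K_def by blast
    have "\<exists>\<kappa>. (\<Sum>a\<in>c. \<kappa> a) = f c \<and> splits_children SS (unit_labelled \<kappa>) c" if "c \<in> K" for c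
    proof -
      have "c \<in> strong SS" "c \<subset> Y"
        using that by (auto simp: K_def lam_child_def)
      then show ?thesis
        using less.hyps strong_card_less[OF set_system less.prems(1)] f(1) that by blast
    qed
    then obtain G where G: "\<And>c. c \<in> K \<Longrightarrow> (\<Sum>a\<in>c. G c a) = f c"
      "\<And>c. c \<in> K \<Longrightarrow> splits_children SS (unit_labelled (G c)) c"
      using bchoice[of K] by metis
    obtain \<kappa> where "(\<Sum>a\<in>Y. \<kappa> a) = (\<Sum>c\<in>K. \<Sum>a\<in>c. G c a)" "splits_children SS (unit_labelled \<kappa>) Y"
      using glued_colouring[OF set_system less.prems(1) False, of G c1 c2] G c12 f(2,3)
      unfolding K_def by auto
    moreover have "(\<Sum>c\<in>K. \<Sum>a\<in>c. G c a) = t"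
      using G(1) f(4) by simp
    ultimately show ?thesis
      by auto
  qed
qed

section \<open>Markers\<close>

definition marks :: "nat set set \<Rightarrow> (nat set \<Rightarrow> bool) \<Rightarrow> nat \<Rightarrow> nat set \<Rightarrow> bool" where
  "marks SS P r X \<longleftrightarrow>
     (\<exists>C. lam_child SS C X \<and> r \<in> C \<and> \<not> P C \<and> (\<forall>Z\<in>strong SS. r \<in> Z \<and> Z \<subset> C \<longrightarrow> P Z))"

lemma marks_imp:
  assumes "marks SS P r X"
  shows "X \<in> strong SS" "r \<in> X" "\<not> is_singleton X"
proof -
  obtain C where "lam_child SS C X" "r \<in> C"
    using assms unfolding marks_def by blast
  then have "X \<in> strong SS" "C \<subset> X" "C \<noteq> {}"
    by (auto simp: lam_child_def)
  then show "X \<in> strong SS" "r \<in> X" "\<not> is_singleton X"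
    using \<open>r \<in> C\<close> by (auto simp: is_singleton_def)
qed

lemma marks_cong:
  assumes "\<And>Z. Z \<in> strong SS \<Longrightarrow> P Z = Q Z"
  shows "marks SS P r X = marks SS Q r X"
proof -
  have "C \<in> strong SS" if "lam_child SS C X" for C
    using that by (simp add: lam_child_def)
  then show ?thesis
    unfolding marks_def using assms by (metis (no_types, lifting))
qed

lemma marks_unique_node:
  assumes "marks SS P r X1" "marks SS P r X2"
  shows "X1 = X2"
proof -
  have not_below: False if r1: "marks SS P r Y1" and r2: "marks SS P r Y2" and "Y1 \<subset> Y2" for Y1 Y2
  proof -
    obtain C1 where C1: "lam_child SS C1 Y1" "r \<in> C1" "\<not> P C1"
      using r1 unfolding marks_def by blast
    obtain C2 where C2: "lam_child SS C2 Y2" "r \<in> C2" "\<forall>Z\<in>strong SS. r \<in> Z \<and> Z \<subset> C2 \<longrightarrow> P Z"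
      using r2 unfolding marks_def by blast
    have "Y1 \<in> strong SS" "C1 \<in> strong SS" "C1 \<subset> Y1" "C2 \<in> strong SS"
      using C1(1) C2(1) by (auto simp: lam_child_def)
    then have "Y1 \<subseteq> C2 \<or> C2 \<subseteq> Y1"
      using strong_comparable C1(2) C2(2) by blast
    moreover have "\<not> C2 \<subset> Y1"
      using C2(1) \<open>Y1 \<in> strong SS\<close> \<open>Y1 \<subset> Y2\<close> unfolding lam_child_def by blast
    ultimately have "C1 \<subset> C2"
      using \<open>C1 \<subset> Y1\<close> by blast
    then show False
      using C2(3) \<open>C1 \<in> strong SS\<close> C1(2,3) by blast
  qed
  have "X1 \<in> strong SS" "X2 \<in> strong SS" "r \<in> X1" "r \<in> X2"
    using marks_imp assms by blast+
  then have "X1 \<subseteq> X2 \<or> X2 \<subseteq> X1"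
    using strong_comparable by blast
  then show ?thesis
    using not_below assms by blast
qed

context
  fixes U :: "nat set" and SS :: "nat set set" and P :: "nat set \<Rightarrow> bool"
  assumes set_system: "set_system U SS" and splits: "splits_children SS P U"
begin

lemma leaf_below_P_path:
  assumes "Y \<in> strong SS"
  shows "\<exists>r\<in>Y. \<forall>Z\<in>strong SS. r \<in> Z \<and> Z \<subset> Y \<longrightarrow> P Z"
  using assms
proof (induction "card Y" arbitrary: Y rule: less_induct)
  case less
  show ?case
  proof (cases "is_singleton Y")
    case True
    then show ?thesis
      by (auto simp: is_singleton_def)
  next
    case False
    then obtain C where C: "lam_child SS C Y" "P C"
      using splits less.prems strong_subset_univ[OF set_system] unfolding splits_children_def by blast
    then have "C \<in> strong SS" "C \<subset> Y"
      by (auto simp: lam_child_def)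
    then obtain r where r: "r \<in> C" "\<forall>Z\<in>strong SS. r \<in> Z \<and> Z \<subset> C \<longrightarrow> P Z"
      using less.hyps strong_card_less[OF set_system less.prems] by blast
    have "P Z" if "Z \<in> strong SS" "r \<in> Z" "Z \<subset> Y" for Z
    proof -
      have "Z \<subseteq> C \<or> C \<subseteq> Z"
        using strong_comparable[OF that(1) \<open>C \<in> strong SS\<close>] that(2) r(1) by blast
      moreover have "\<not> C \<subset> Z"
        using C(1) that(1,3) unfolding lam_child_def by blast
      ultimately have "Z \<subseteq> C"
        by blast
      then show "P Z"
        using r(2) that(1,2) C(2) by (cases "Z = C") auto
    qed
    then show ?thesis
      using r(1) \<open>C \<subset> Y\<close> by blast
  qed
qed

lemma marker_exists:
  assumes "X \<in> strong SS" "\<not> is_singleton X"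
  shows "\<exists>r. marks SS P r X"
proof -
  have "X \<subseteq> U"
    using strong_subset_univ[OF set_system assms(1)] .
  then obtain C where C: "lam_child SS C X" "\<not> P C"
    using splits assms unfolding splits_children_def by blast
  then have "C \<in> strong SS"
    by (simp add: lam_child_def)
  then obtain r where "r \<in> C" "\<forall>Z\<in>strong SS. r \<in> Z \<and> Z \<subset> C \<longrightarrow> P Z"
    using leaf_below_P_path by blast
  with C show ?thesis
    unfolding marks_def by blast
qed

lemma marker_set_exists:
  "\<exists>R\<subseteq>U. \<forall>X\<in>strong SS. \<not> is_singleton X \<longrightarrow> (\<exists>!r. r \<in> R \<and> marks SS P r X)"
proof -
  define I where "I = {X \<in> strong SS. \<not> is_singleton X}"
  have "\<forall>X\<in>I. \<exists>r. marks SS P r X"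
    using marker_exists by (simp add: I_def)
  from bchoice[OF this] obtain m where m: "\<And>X. X \<in> I \<Longrightarrow> marks SS P (m X) X"
    by blast
  show ?thesis
  proof (intro exI conjI)
    show "m ` I \<subseteq> U"
      using m marks_imp(2) strong_subset_univ[OF set_system] by (force simp: I_def)
    show "\<forall>X\<in>strong SS. \<not> is_singleton X \<longrightarrow> (\<exists>!r. r \<in> m ` I \<and> marks SS P r X)"
    proof (intro ballI impI)
      fix X assume "X \<in> strong SS" "\<not> is_singleton X"
      then have "X \<in> I"
        by (simp add: I_def)
      show "\<exists>!r. r \<in> m ` I \<and> marks SS P r X"
      proof (rule ex1I)
        show "m X \<in> m ` I \<and> marks SS P (m X) X"
          using m \<open>X \<in> I\<close> by blast
        fix r assume "r \<in> m ` I \<and> marks SS P r X"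
        then obtain X' where "X' \<in> I" "r = m X'" "marks SS P r X"
          by blast
        then show "r = m X"
          using m marks_unique_node by metis
      qed
    qed
  qed
qed

end

section \<open>Formulas\<close>

definition FAnd :: "form \<Rightarrow> form \<Rightarrow> form" where
  "FAnd f g = FNot (FOr (FNot f) (FNot g))"

definition FImp :: "form \<Rightarrow> form \<Rightarrow> form" where
  "FImp f g = FOr (FNot f) g"

definition FIff :: "form \<Rightarrow> form \<Rightarrow> form" where
  "FIff f g = FAnd (FImp f g) (FImp g f)"

definition FAll1 :: "nat \<Rightarrow> form \<Rightarrow> form" where
  "FAll1 x f = FNot (FEx1 x (FNot f))"

definition FAll2 :: "nat \<Rightarrow> form \<Rightarrow> form" where
  "FAll2 X f = FNot (FEx2 X (FNot f))"

lemma sat_derived [simp]: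
  "sat M v w (FAnd f g) \<longleftrightarrow> sat M v w f \<and> sat M v w g"
  "sat M v w (FImp f g) \<longleftrightarrow> (sat M v w f \<longrightarrow> sat M v w g)"
  "sat M v w (FIff f g) \<longleftrightarrow> (sat M v w f \<longleftrightarrow> sat M v w g)"
  "sat M v w (FAll1 x f) \<longleftrightarrow> (\<forall>a\<in>univ M. sat M (v(x := a)) w f)"
  "sat M v w (FAll2 X f) \<longleftrightarrow> (\<forall>S. S \<subseteq> univ M \<longrightarrow> sat M v (w(X := S)) f)"
  by (auto simp: FAnd_def FImp_def FIff_def FAll1_def FAll2_def)

lemma fv_derived [simp]:
  "fv1 (FAnd f g) = fv1 f \<union> fv1 g" "fv2 (FAnd f g) = fv2 f \<union> fv2 g"
  "fv1 (FImp f g) = fv1 f \<union> fv1 g" "fv2 (FImp f g) = fv2 f \<union> fv2 g"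
  "fv1 (FIff f g) = fv1 f \<union> fv1 g" "fv2 (FIff f g) = fv2 f \<union> fv2 g"
  "fv1 (FAll1 x f) = fv1 f - {x}" "fv2 (FAll1 x f) = fv2 f"
  "fv1 (FAll2 X f) = fv1 f" "fv2 (FAll2 X f) = fv2 f - {X}"
  by (auto simp: FAnd_def FImp_def FIff_def FAll1_def FAll2_def)

text \<open>The set variables 20--23 are reserved as bound variables of the formulas below, whose free
  set variables are therefore taken below 20.\<close>

definition FSubset :: "nat \<Rightarrow> nat \<Rightarrow> form" where
  "FSubset X Y = FAll1 0 (FImp (FMem 0 X) (FMem 0 Y))"

definition FPsubset :: "nat \<Rightarrow> nat \<Rightarrow> form" where
  "FPsubset X Y = FAnd (FSubset X Y) (FNot (FSubset Y X))"

definition FOverlap :: "nat \<Rightarrow> nat \<Rightarrow> form" where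
  "FOverlap X Y = FAnd (FEx1 0 (FAnd (FMem 0 X) (FMem 0 Y))) (FAnd (FNot (FSubset X Y)) (FNot (FSubset Y X)))"

definition FSingleton :: "nat \<Rightarrow> form" where
  "FSingleton X = FEx1 0 (FAnd (FMem 0 X) (FAll1 1 (FImp (FMem 1 X) (FEq 1 0))))"

definition FSet :: "nat \<Rightarrow> form" where
  "FSet X = FSetP ''SET'' [X]"

definition FStrong :: "nat \<Rightarrow> form" where
  "FStrong X = FAnd (FSet X) (FAll2 20 (FImp (FSet 20) (FNot (FOverlap X 20))))"

definition FExStrong :: "nat \<Rightarrow> form \<Rightarrow> form" where
  "FExStrong X f = FEx2 X (FAnd (FStrong X) f)"

definition FAllStrong :: "nat \<Rightarrow> form \<Rightarrow> form" where
  "FAllStrong X f = FAll2 X (FImp (FStrong X) f)"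

definition FChild :: "nat \<Rightarrow> nat \<Rightarrow> form" where
  "FChild C X = FAnd (FStrong C) (FAnd (FStrong X) (FAnd (FPsubset C X)
     (FNot (FExStrong 23 (FAnd (FPsubset C 23) (FPsubset 23 X))))))"

definition FOddIn :: "string \<Rightarrow> nat \<Rightarrow> form" where
  "FOddIn p Z = FEx2 21 (FAnd (FAll1 0 (FIff (FMem 0 21) (FAnd (FMem 0 Z) (FRel p [0])))) (FNot (FEven 21)))"

definition unary_rel :: "struct \<Rightarrow> string \<Rightarrow> nat set" where
  "unary_rel M p = {a. [Elt a] \<in> interp M (RelK, p, 1)}"

lemma mem_unary_rel [simp]: "[Elt a] \<in> interp M (RelK, p, Suc 0) \<longleftrightarrow> a \<in> unary_rel M p"
  by (simp add: unary_rel_def)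

lemma sat_FSubset [simp]: "sat M v w (FSubset X Y) \<longleftrightarrow> univ M \<inter> w X \<subseteq> w Y"
  by (auto simp: FSubset_def)

lemma sat_FSingleton:
  "w X \<subseteq> univ M \<Longrightarrow> sat M v w (FSingleton X) \<longleftrightarrow> is_singleton (w X)"
  by (auto simp: FSingleton_def is_singleton_def)

lemma sat_FOddIn:
  assumes "Z \<noteq> 21" "w Z \<subseteq> univ M"
  shows "sat M v w (FOddIn p Z) \<longleftrightarrow> odd (card (w Z \<inter> unary_rel M p))"
proof -
  have "sat M v w (FOddIn p Z) \<longleftrightarrow>
      (\<exists>S. S \<subseteq> univ M \<and> (\<forall>a\<in>univ M. a \<in> S \<longleftrightarrow> a \<in> w Z \<inter> unary_rel M p) \<and> odd (card S))"
    using assms(1) by (simp add: FOddIn_def)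
  also have "\<dots> \<longleftrightarrow> odd (card (w Z \<inter> unary_rel M p))"
  proof
    assume "\<exists>S. S \<subseteq> univ M \<and> (\<forall>a\<in>univ M. a \<in> S \<longleftrightarrow> a \<in> w Z \<inter> unary_rel M p) \<and> odd (card S)"
    then obtain S where "S \<subseteq> univ M" "\<forall>a\<in>univ M. a \<in> S \<longleftrightarrow> a \<in> w Z \<inter> unary_rel M p" "odd (card S)"
      by blast
    moreover from this have "S = w Z \<inter> unary_rel M p"
      using assms(2) by blast
    ultimately show "odd (card (w Z \<inter> unary_rel M p))"
      by simp
  next
    assume "odd (card (w Z \<inter> unary_rel M p))"
    then show "\<exists>S. S \<subseteq> univ M \<and> (\<forall>a\<in>univ M. a \<in> S \<longleftrightarrow> a \<in> w Z \<inter> unary_rel M p) \<and> odd (card S)"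
      using assms(2) by (intro exI[of _ "w Z \<inter> unary_rel M p"]) blast
  qed
  finally show ?thesis .
qed

lemma sum_of_bool_eq_odd_card:
  assumes "finite Z"
  shows "(\<Sum>a\<in>Z. of_bool (a \<in> C) :: bit) = of_bool (odd (card (Z \<inter> C)))"
  using assms
proof (induction rule: finite_induct)
  case (insert x F)
  then show ?case
    by (cases "x \<in> C") (auto simp: Int_insert_left bit_add_self)
qed simp

lemma of_bool_triple_unit_label:
  "((of_bool p, of_bool q, of_bool r) :: label) \<in> unit_labels \<longleftrightarrow>
     p \<and> \<not> q \<and> \<not> r \<or> \<not> p \<and> q \<and> \<not> r \<or> \<not> p \<and> \<not> q \<and> r"
  by (cases p; cases q; cases r) (simp_all add: unit_labels_def)

locale transduction_names =
  fixes p1 p2 p3 rr cc :: string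
begin

definition colouring :: "struct \<Rightarrow> nat \<Rightarrow> label" where
  "colouring M a = (of_bool (a \<in> unary_rel M p1), of_bool (a \<in> unary_rel M p2), of_bool (a \<in> unary_rel M p3))"

definition is_copy :: "struct \<Rightarrow> nat \<Rightarrow> nat \<Rightarrow> bool" where
  "is_copy M a b \<longleftrightarrow> [Elt a, Elt b] \<in> interp M (RelK, cc, 2)"

definition FUnitLabelled :: "nat \<Rightarrow> form" where
  "FUnitLabelled Z = FOr (FAnd (FOddIn p1 Z) (FAnd (FNot (FOddIn p2 Z)) (FNot (FOddIn p3 Z))))
     (FOr (FAnd (FNot (FOddIn p1 Z)) (FAnd (FOddIn p2 Z) (FNot (FOddIn p3 Z))))
          (FAnd (FNot (FOddIn p1 Z)) (FAnd (FNot (FOddIn p2 Z)) (FOddIn p3 Z))))"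

definition FMarks :: "nat \<Rightarrow> nat \<Rightarrow> form" where
  "FMarks r X = FAnd (FRel rr [r]) (FExStrong 22 (FAnd (FChild 22 X) (FAnd (FMem r 22)
     (FAnd (FNot (FUnitLabelled 22))
       (FAllStrong 23 (FImp (FAnd (FMem r 23) (FPsubset 23 22)) (FUnitLabelled 23)))))))"

definition FAccept :: form where
  "FAccept = FAllStrong 0 (FImp (FNot (FSingleton 0))
     (FEx1 2 (FAnd (FMarks 2 0) (FAll1 3 (FImp (FMarks 3 0) (FEq 3 2))))))"

definition FKept :: form where
  "FKept = FOr (FNot (FEx1 1 (FRel cc [1, 0]))) (FEx1 1 (FAnd (FRel cc [1, 0]) (FEx2 0 (FMarks 1 0))))"

definition FRepresents :: "nat \<Rightarrow> nat \<Rightarrow> form" where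
  "FRepresents u X =
     FOr (FAnd (FNot (FEx1 2 (FRel cc [2, u]))) (FAnd (FSet X) (FAnd (FMem u X) (FSingleton X))))
       (FEx1 2 (FAnd (FRel cc [2, u]) (FMarks 2 X)))"

definition FAncestor :: form where
  "FAncestor = FEx2 0 (FEx2 1 (FAnd (FRepresents 0 0) (FAnd (FRepresents 1 1) (FSubset 1 0))))"

lemma sum_colouring:
  assumes "finite Z"
  shows "(\<Sum>a\<in>Z. colouring M a) = (of_bool (odd (card (Z \<inter> unary_rel M p1))),
     of_bool (odd (card (Z \<inter> unary_rel M p2))), of_bool (odd (card (Z \<inter> unary_rel M p3))))"
  unfolding colouring_def prod_eq_iff fst_sum snd_sum fst_conv snd_conv
  using sum_of_bool_eq_odd_card[OF assms] by simp_all

lemma mem_is_copy [simp]: "[Elt a, Elt b] \<in> interp M (RelK, cc, Suc (Suc 0)) \<longleftrightarrow> is_copy M a b"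
  by (simp add: is_copy_def numeral_2_eq_2)

end

locale set_system_model = transduction_names +
  fixes M :: struct and U :: "nat set" and SS :: "nat set set"
  assumes set_system: "set_system U SS"
    and univ_subset: "U \<subseteq> univ M"
    and interp_SET: "interp M SET_sym = {[SetV X] | X. X \<in> SS}"
begin

definition model_marks :: "nat \<Rightarrow> nat set \<Rightarrow> bool" where
  "model_marks r X \<longleftrightarrow> r \<in> unary_rel M rr \<and> marks SS (unit_labelled (colouring M)) r X"

lemma member_subset_univ [simp]: "X \<in> SS \<Longrightarrow> X \<subseteq> univ M"
  using set_system univ_subset by (auto simp: set_system_def)

lemma strong_subset_univ_model [simp]: "X \<in> strong SS \<Longrightarrow> X \<subseteq> univ M"
  by (simp add: strong_def)

lemma model_marks_imp:
  assumes "model_marks r X"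
  shows "X \<in> strong SS" "\<not> is_singleton X" "r \<in> X" "r \<in> U" "r \<in> univ M"
  using assms marks_imp strong_subset_univ[OF set_system] univ_subset
  unfolding model_marks_def by blast+

lemma sat_FSet [simp]: "sat M v w (FSet X) \<longleftrightarrow> w X \<in> SS"
  using interp_SET by (auto simp: FSet_def SET_sym_def)

lemma sat_FStrong [simp]:
  assumes "X \<noteq> 20"
  shows "sat M v w (FStrong X) \<longleftrightarrow> w X \<in> strong SS"
proof -
  have "sat M v (w(20 := S)) (FOverlap X 20) \<longleftrightarrow> overlap (w X) S" if "w X \<in> SS" "S \<in> SS" for S
    using assms member_subset_univ[OF that(1)] member_subset_univ[OF that(2)]
    by (auto simp: FOverlap_def overlap_def)
  then show ?thesis
    using assms by (auto simp: FStrong_def strong_def)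
qed

lemma sat_FExStrong [simp]:
  assumes "X \<noteq> 20"
  shows "sat M v w (FExStrong X f) \<longleftrightarrow> (\<exists>S\<in>strong SS. sat M v (w(X := S)) f)"
proof
  assume "\<exists>S\<in>strong SS. sat M v (w(X := S)) f"
  then obtain S where "S \<in> strong SS" "sat M v (w(X := S)) f"
    by blast
  moreover have "S \<subseteq> univ M" "sat M v (w(X := S)) (FStrong X)"
    using \<open>S \<in> strong SS\<close> assms by simp_all
  ultimately show "sat M v w (FExStrong X f)"
    unfolding FExStrong_def sat.simps(9) sat_derived(1) by blast
qed (use assms in \<open>auto simp: FExStrong_def\<close>)

lemma sat_FAllStrong [simp]:
  "X \<noteq> 20 \<Longrightarrow> sat M v w (FAllStrong X f) \<longleftrightarrow> (\<forall>S\<in>strong SS. sat M v (w(X := S)) f)"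
  by (auto simp: FAllStrong_def)

lemma sat_FPsubset:
  "w X \<subseteq> univ M \<Longrightarrow> w Y \<subseteq> univ M \<Longrightarrow> sat M v w (FPsubset X Y) \<longleftrightarrow> w X \<subset> w Y"
  by (auto simp: FPsubset_def)

lemma sat_FChild:
  assumes "C \<notin> {20, 23}" "X \<notin> {20, 23}"
  shows "sat M v w (FChild C X) \<longleftrightarrow> lam_child SS (w C) (w X)"
  using assms by (auto simp: FChild_def lam_child_def sat_FPsubset)

lemma sat_FUnitLabelled:
  assumes "Z \<noteq> 21" "w Z \<in> strong SS"
  shows "sat M v w (FUnitLabelled Z) \<longleftrightarrow> unit_labelled (colouring M) (w Z)"
  using assms strong_finite[OF set_system]
  by (simp add: FUnitLabelled_def sat_FOddIn sum_colouring of_bool_triple_unit_label)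

lemma sat_FMarks:
  assumes "X < 20"
  shows "sat M v w (FMarks r X) \<longleftrightarrow> model_marks (v r) (w X)"
proof -
  have "sat M v w (FMarks r X) \<longleftrightarrow> v r \<in> unary_rel M rr \<and> (\<exists>C\<in>strong SS. lam_child SS C (w X) \<and>
      v r \<in> C \<and> \<not> unit_labelled (colouring M) C \<and>
      (\<forall>Z\<in>strong SS. v r \<in> Z \<and> Z \<subset> C \<longrightarrow> unit_labelled (colouring M) Z))"
    using assms by (simp add: FMarks_def sat_FChild sat_FUnitLabelled sat_FPsubset)
  then show ?thesis
    unfolding model_marks_def marks_def lam_child_def by blast
qed

lemma sat_FAccept:
  "sat M v w FAccept \<longleftrightarrow> (\<forall>X\<in>strong SS. \<not> is_singleton X \<longrightarrow> (\<exists>!r. model_marks r X))"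
proof -
  have "sat M v w FAccept \<longleftrightarrow> (\<forall>X\<in>strong SS. \<not> is_singleton X \<longrightarrow>
      (\<exists>r\<in>univ M. model_marks r X \<and> (\<forall>r'\<in>univ M. model_marks r' X \<longrightarrow> r' = r)))"
    by (simp add: FAccept_def sat_FSingleton sat_FMarks)
  also have "\<dots> \<longleftrightarrow> (\<forall>X\<in>strong SS. \<not> is_singleton X \<longrightarrow> (\<exists>!r. model_marks r X))"
    using model_marks_imp(5) by blast
  finally show ?thesis .
qed

lemma sat_FKept:
  "sat M v w FKept \<longleftrightarrow> (\<forall>a\<in>univ M. \<not> is_copy M a (v 0)) \<or>
     (\<exists>a\<in>univ M. is_copy M a (v 0) \<and> (\<exists>X. model_marks a X))"
proof -
  have "(\<exists>X\<subseteq>univ M. model_marks a X) \<longleftrightarrow> (\<exists>X. model_marks a X)" for a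
    using model_marks_imp(1) strong_subset_univ_model by blast
  then show ?thesis
    by (simp add: FKept_def sat_FMarks)
qed

lemma sat_FRepresents:
  assumes "u \<noteq> 2" "X < 20" "w X \<subseteq> univ M"
  shows "sat M v w (FRepresents u X) \<longleftrightarrow>
    (\<forall>a\<in>univ M. \<not> is_copy M a (v u)) \<and> w X = {v u} \<and> w X \<in> SS \<or>
    (\<exists>a\<in>univ M. is_copy M a (v u) \<and> model_marks a (w X))"
  using assms by (auto simp: FRepresents_def sat_FMarks sat_FSingleton is_singleton_def)

end

section \<open>The transduction\<close>

definition add_colour :: "string \<Rightarrow> nat set \<Rightarrow> struct \<Rightarrow> struct" where
  "add_colour p C A = \<lparr>voc = voc A \<union> {(RelK, p, 1)}, univ = univ A,
     interp = (\<lambda>s. if s = (RelK, p, 1) then {[Elt a] | a. a \<in> C} else interp A s)\<rparr>"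

definition add_copy :: "string \<Rightarrow> (nat \<Rightarrow> nat) \<Rightarrow> struct \<Rightarrow> struct" where
  "add_copy c g A = \<lparr>voc = voc A \<union> {(RelK, c, 2)}, univ = univ A \<union> g ` univ A,
     interp = (\<lambda>s. if s = (RelK, c, 2) then {[Elt a, Elt (g a)] | a. a \<in> univ A} else interp A s)\<rparr>"

definition restrict_to :: "nat set \<Rightarrow> struct \<Rightarrow> struct" where
  "restrict_to V A = \<lparr>voc = voc A, univ = V,
     interp = (\<lambda>s. {t \<in> interp A s. \<forall>x\<in>set t. case x of Elt e \<Rightarrow> e \<in> V | SetV X \<Rightarrow> X \<subseteq> V})\<rparr>"

definition interp_struct :: "(sym \<times> form) list \<Rightarrow> struct \<Rightarrow> struct" where
  "interp_struct l A = \<lparr>voc = set (map fst l), univ = univ A,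
     interp = (\<lambda>s. case map_of l s of None \<Rightarrow> {} | Some f \<Rightarrow> interp_sym A s f)\<rparr>"

lemma add_colour_simps [simp]:
  "univ (add_colour p C A) = univ A"
  "interp (add_colour p C A) s = (if s = (RelK, p, 1) then {[Elt a] | a. a \<in> C} else interp A s)"
  by (simp_all add: add_colour_def)

lemma add_copy_simps [simp]:
  "univ (add_copy c g A) = univ A \<union> g ` univ A"
  "interp (add_copy c g A) s =
     (if s = (RelK, c, 2) then {[Elt a, Elt (g a)] | a. a \<in> univ A} else interp A s)"
  by (simp_all add: add_copy_def)

lemma restrict_to_simps:
  "univ (restrict_to V A) = V"
  "t \<in> interp (restrict_to V A) s \<longleftrightarrow>
     t \<in> interp A s \<and> (\<forall>x\<in>set t. case x of Elt e \<Rightarrow> e \<in> V | SetV X \<Rightarrow> X \<subseteq> V)"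
  by (simp_all add: restrict_to_def)

lemma interp_restrict_to_wf:
  assumes "wf_struct Voc A" "Q \<in> Voc" "univ A \<subseteq> V" "interp M Q = interp A Q"
  shows "interp (restrict_to V M) Q = interp A Q"
proof -
  obtain k n a where Q: "Q = (k, n, a)"
    by (cases Q rule: prod_cases3)
  have "\<forall>x\<in>set t. case x of Elt e \<Rightarrow> e \<in> V | SetV X \<Rightarrow> X \<subseteq> V" if "t \<in> interp A Q" for t
  proof
    fix x assume "x \<in> set t"
    then have "case k of RelK \<Rightarrow> (\<exists>e\<in>univ A. x = Elt e) | SetK \<Rightarrow> (\<exists>X. X \<subseteq> univ A \<and> x = SetV X)"
      using assms(1,2) that unfolding wf_struct_def Q by blast
    then show "case x of Elt e \<Rightarrow> e \<in> V | SetV X \<Rightarrow> X \<subseteq> V"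
      using assms(3) by (cases k) auto
  qed
  then show ?thesis
    using assms(4) by (auto simp: restrict_to_simps)
qed

lemma unary_rel_restrict_to: "unary_rel (restrict_to V M) p = unary_rel M p \<inter> V"
  by (auto simp: unary_rel_def restrict_to_simps simp del: mem_unary_rel)

lemma interp_struct_simps:
  "voc (interp_struct l A) = set (map fst l)"
  "univ (interp_struct l A) = univ A"
  "interp (interp_struct l A) s = (case map_of l s of None \<Rightarrow> {} | Some f \<Rightarrow> interp_sym A s f)"
  by (simp_all add: interp_struct_def)

lemma step_Colour: "step (Colour p) A B \<longleftrightarrow> (\<exists>C. C \<subseteq> univ A \<and> B = add_colour p C A)"
  by (simp add: add_colour_def)

lemma step_Copy_single:
  "step (Copy [c]) A B \<longleftrightarrow> (\<exists>g. inj_on g (univ A) \<and> (\<forall>a\<in>univ A. g a \<notin> univ A) \<and> B = add_copy c g A)"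
proof -
  have single:
    "{(RelK, [c] ! i, 2 :: nat) | i. i < length [c]} = {(RelK, c, 2)}"
    "{f i a | i a. i < length [c] \<and> a \<in> univ A} = f 0 ` univ A"
    "inj_on (\<lambda>(i, a). f i a) ({..<length [c]} \<times> univ A) \<longleftrightarrow> inj_on (f 0) (univ A)"
    "(\<forall>i<length [c]. \<forall>a\<in>univ A. f i a \<notin> univ A) \<longleftrightarrow> (\<forall>a\<in>univ A. f 0 a \<notin> univ A)"
    "(\<lambda>s. {[Elt a, Elt (f i a)] | a i. i < length [c] \<and> s = (RelK, [c] ! i, 2) \<and> a \<in> univ A} \<union>
        (if s \<in> {(RelK, c, 2)} then {} else interp A s)) =
      (\<lambda>s. if s = (RelK, c, 2) then {[Elt a, Elt (f 0 a)] | a. a \<in> univ A} else interp A s)"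
    for f :: "nat \<Rightarrow> nat \<Rightarrow> nat"
    by (auto simp: inj_on_def fun_eq_iff)
  have "step (Copy [c]) A B \<longleftrightarrow> (\<exists>f :: nat \<Rightarrow> nat \<Rightarrow> nat.
      inj_on (f 0) (univ A) \<and> (\<forall>a\<in>univ A. f 0 a \<notin> univ A) \<and> B = add_copy c (f 0) A)"
    unfolding step.simps add_copy_def single ..
  also have "\<dots> \<longleftrightarrow> (\<exists>g. inj_on g (univ A) \<and> (\<forall>a\<in>univ A. g a \<notin> univ A) \<and> B = add_copy c g A)"
  proof
    assume "\<exists>g. inj_on g (univ A) \<and> (\<forall>a\<in>univ A. g a \<notin> univ A) \<and> B = add_copy c g A"
    then obtain g where "inj_on g (univ A) \<and> (\<forall>a\<in>univ A. g a \<notin> univ A) \<and> B = add_copy c g A"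
      by blast
    then show "\<exists>f :: nat \<Rightarrow> nat \<Rightarrow> nat.
        inj_on (f 0) (univ A) \<and> (\<forall>a\<in>univ A. f 0 a \<notin> univ A) \<and> B = add_copy c (f 0) A"
      by (intro exI[of _ "\<lambda>_. g"]) simp
  qed blast
  finally show ?thesis .
qed

lemma step_Restrict:
  "step (Restrict f) A B \<longleftrightarrow> B = restrict_to {a \<in> univ A. sat A (\<lambda>_. a) (\<lambda>_. {}) f} A"
  by (simp add: restrict_to_def Let_def)

lemma step_Interp: "step (Interp l) A B \<longleftrightarrow> B = interp_struct l A"
  by (simp add: interp_struct_def)

fun identity_form :: "sym \<Rightarrow> form" where
  "identity_form (RelK, n, a) = FRel n [0..<a]"
| "identity_form (SetK, n, a) = FSetP n [0..<a]"

lemma map_nth_comp: "map (\<lambda>i. f (xs ! i)) [0..<length xs] = map f xs"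
  by (rule nth_equalityI) auto

lemma interp_sym_identity_form:
  assumes wf: "wf_struct Voc A" and Q: "Q \<in> Voc"
    and same: "interp D Q = interp A Q" and univ: "univ A \<subseteq> univ D"
  shows "interp_sym D Q (identity_form Q) = interp A Q"
proof -
  obtain k n a where Qe: "Q = (k, n, a)"
    by (cases Q rule: prod_cases3)
  have wfQ: "length t = a \<and> (\<forall>x\<in>set t. case k of
      RelK \<Rightarrow> (\<exists>e\<in>univ A. x = Elt e) | SetK \<Rightarrow> (\<exists>X. X \<subseteq> univ A \<and> x = SetV X))"
    if "t \<in> interp A Q" for t
    using wf Q that unfolding wf_struct_def Qe by blast
  show ?thesis
  proof (cases k)
    case RelK
    have "t \<in> interp_sym D Q (identity_form Q)" if t: "t \<in> interp A Q" for t
    proof -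
      have "length t = a" and elts: "\<forall>x\<in>set t. \<exists>e\<in>univ A. x = Elt e"
        using wfQ[OF t] RelK by auto
      define xs where "xs = map (\<lambda>x. case x of Elt e \<Rightarrow> e | SetV _ \<Rightarrow> 0) t"
      have "t = map Elt xs" "set xs \<subseteq> univ A"
        unfolding xs_def using elts by (induction t) auto
      then show ?thesis
        using t univ same \<open>length t = a\<close> by (auto simp: Qe RelK map_nth_comp intro!: exI[of _ xs])
    qed
    then show ?thesis
      using same by (auto simp: Qe RelK map_nth_comp)
  next
    case SetK
    have "t \<in> interp_sym D Q (identity_form Q)" if t: "t \<in> interp A Q" for t
    proof -
      have "length t = a" and sets: "\<forall>x\<in>set t. \<exists>X. X \<subseteq> univ A \<and> x = SetV X"
        using wfQ[OF t] SetK by auto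
      define Xs where "Xs = map (\<lambda>x. case x of SetV X \<Rightarrow> X | Elt _ \<Rightarrow> {}) t"
      have "t = map SetV Xs" "\<forall>X\<in>set Xs. X \<subseteq> univ A"
        unfolding Xs_def using sets by (induction t) auto
      then show ?thesis
        using t univ same \<open>length t = a\<close> by (auto simp: Qe SetK map_nth_comp intro!: exI[of _ Xs])
    qed
    then show ?thesis
      using same by (auto simp: Qe SetK map_nth_comp)
  qed
qed

context transduction_names
begin

definition coloured_copy ::
  "nat set \<Rightarrow> nat set \<Rightarrow> nat set \<Rightarrow> nat set \<Rightarrow> (nat \<Rightarrow> nat) \<Rightarrow> struct \<Rightarrow> struct" where
  "coloured_copy C1 C2 C3 R g A =
     add_copy cc g (add_colour rr R (add_colour p3 C3 (add_colour p2 C2 (add_colour p1 C1 A))))"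

definition kept :: "struct \<Rightarrow> nat set" where
  "kept M = {a \<in> univ M. sat M (\<lambda>_. a) (\<lambda>_. {}) FKept}"

definition tau :: "(sym \<times> form) list \<Rightarrow> atomic list" where
  "tau l = [Colour p1, Colour p2, Colour p3, Colour rr, Copy [cc],
     Filter FAccept, Restrict FKept, Interp l]"

definition tau_interps :: "sym list \<Rightarrow> (sym \<times> form) list" where
  "tau_interps vs = map (\<lambda>Q. (Q, identity_form Q)) vs @ [(ancestor_sym, FAncestor)]"

lemma is_copy_restrict_to:
  "is_copy (restrict_to V M) a b \<longleftrightarrow> is_copy M a b \<and> a \<in> V \<and> b \<in> V"
  by (auto simp: is_copy_def restrict_to_simps simp del: mem_is_copy)

lemma run_tau:
  "run (tau l) A B \<longleftrightarrow> (\<exists>C1 C2 C3 R g. C1 \<subseteq> univ A \<and> C2 \<subseteq> univ A \<and> C3 \<subseteq> univ A \<and> R \<subseteq> univ A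
     \<and> inj_on g (univ A) \<and> (\<forall>a\<in>univ A. g a \<notin> univ A)
     \<and> sat (coloured_copy C1 C2 C3 R g A) (\<lambda>_. 0) (\<lambda>_. {}) FAccept
     \<and> B = interp_struct l (restrict_to (kept (coloured_copy C1 C2 C3 R g A)) (coloured_copy C1 C2 C3 R g A)))"
proof -
  have one_point:
    "(\<exists>C. (\<exists>x. Q x \<and> C = f x) \<and> P C) \<longleftrightarrow> (\<exists>x. Q x \<and> P (f x))"
    "(\<exists>C. (\<exists>x. Q x \<and> Q' x \<and> C = f x) \<and> P C) \<longleftrightarrow> (\<exists>x. Q x \<and> Q' x \<and> P (f x))"
    "(\<exists>C. (C = D \<and> S) \<and> P C) \<longleftrightarrow> S \<and> P D"
    for Q Q' f P D S
    by blast+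
  show ?thesis
    unfolding tau_def coloured_copy_def kept_def
    by (simp only: run.simps step_Colour step_Copy_single step_Restrict step_Interp step.simps(1)
        one_point add_colour_simps(1) simp_thms ex_simps conj_assoc)
qed

lemma map_of_tau_interps:
  "map_of (tau_interps vs) s =
     (if s \<in> set vs then Some (identity_form s) else if s = ancestor_sym then Some FAncestor else None)"
  by (induction vs) (auto simp: tau_interps_def)

lemma fv_tau_formulas:
  "fv1 FAccept = {}" "fv2 FAccept = {}"
  "fv1 FKept \<subseteq> {0}" "fv2 FKept = {}"
  "fv1 FAncestor \<subseteq> {..<2}" "fv2 FAncestor = {}"
  by (auto simp: FAccept_def FKept_def FAncestor_def FRepresents_def FMarks_def FChild_def
      FUnitLabelled_def FOddIn_def FStrong_def FExStrong_def FAllStrong_def FSubset_def FPsubset_def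
      FOverlap_def FSingleton_def FSet_def)

lemma wf_tau:
  assumes "distinct vs" "ancestor_sym \<notin> set vs"
  shows "wf_trans (tau (tau_interps vs))"
proof -
  have "distinct (map fst (tau_interps vs))"
    using assms by (simp add: tau_interps_def comp_def)
  moreover have "\<forall>((k, n, a), f) \<in> set (map (\<lambda>Q. (Q, identity_form Q)) vs). case k of
      RelK \<Rightarrow> fv1 f \<subseteq> {..<a} \<and> fv2 f = {} | SetK \<Rightarrow> fv1 f = {} \<and> fv2 f \<subseteq> {..<a}"
    by (auto split: kind.split)
  ultimately show ?thesis
    using fv_tau_formulas by (simp add: wf_trans_def tau_def tau_interps_def ancestor_sym_def)
qed

end

section \<open>Runs of the transduction\<close>

locale fresh_names = transduction_names +
  fixes Voc :: "sym set"
  assumes names_distinct: "distinct [p1, p2, p3, rr, cc]"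
    and names_fresh: "n \<in> {p1, p2, p3, rr, cc} \<Longrightarrow> (k, n, a) \<notin> Voc"

locale tau_run = fresh_names +
  fixes A :: struct and C1 C2 C3 R :: "nat set" and g :: "nat \<Rightarrow> nat"
  assumes wf_A: "wf_struct Voc A"
    and g_inj: "inj_on g (univ A)" and g_fresh: "\<forall>a\<in>univ A. g a \<notin> univ A"
    and colours_subset: "C1 \<subseteq> univ A" "C2 \<subseteq> univ A" "C3 \<subseteq> univ A" "R \<subseteq> univ A"
begin

abbreviation M :: struct where
  "M \<equiv> coloured_copy C1 C2 C3 R g A"

abbreviation D :: struct where
  "D \<equiv> restrict_to (kept M) M"

lemma univ_M: "univ M = univ A \<union> g ` univ A"
  by (simp add: coloured_copy_def)

lemma interp_M_Voc: "Q \<in> Voc \<Longrightarrow> interp M Q = interp A Q"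
  using names_fresh by (auto simp: coloured_copy_def)

lemma unary_rel_M: "unary_rel M p1 = C1" "unary_rel M p2 = C2" "unary_rel M p3 = C3" "unary_rel M rr = R"
  using names_distinct by (auto simp: coloured_copy_def unary_rel_def)

lemma is_copy_M: "is_copy M a b \<longleftrightarrow> a \<in> univ A \<and> b = g a"
  by (auto simp: coloured_copy_def is_copy_def)

lemma univ_A_kept: "univ A \<subseteq> kept M"
proof
  fix a assume "a \<in> univ A"
  then have "sat M (\<lambda>_. a) (\<lambda>_. {}) FKept"
    using g_fresh by (auto simp: FKept_def is_copy_M)
  then show "a \<in> kept M"
    using \<open>a \<in> univ A\<close> univ_M by (simp add: kept_def)
qed

lemma interp_D_Voc: "Q \<in> Voc \<Longrightarrow> interp D Q = interp A Q"
  using interp_restrict_to_wf[OF wf_A _ univ_A_kept interp_M_Voc] .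

lemma embeds_into_output:
  assumes "set vs = Voc"
  shows "sqsub A (interp_struct (tau_interps vs) D)"
  unfolding sqsub_def
proof (intro conjI ballI)
  show "voc A \<subseteq> voc (interp_struct (tau_interps vs) D)"
    using wf_A assms by (auto simp: wf_struct_def interp_struct_simps tau_interps_def)
  show "univ A \<subseteq> univ (interp_struct (tau_interps vs) D)"
    using univ_A_kept by (simp add: interp_struct_simps restrict_to_simps)
  fix Q assume "Q \<in> voc A"
  then have Q: "Q \<in> Voc"
    using wf_A by (simp add: wf_struct_def)
  have "interp (interp_struct (tau_interps vs) D) Q = interp_sym D Q (identity_form Q)"
    using Q assms by (simp add: interp_struct_simps map_of_tau_interps)
  also have "\<dots> = interp A Q"
    using interp_sym_identity_form[OF wf_A Q interp_D_Voc[OF Q]] univ_A_kept by (simp add: restrict_to_simps)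
  finally show "interp A Q = interp (interp_struct (tau_interps vs) D) Q"
    by simp
qed

end

locale tau_run_on_input = tau_run +
  fixes U :: "nat set" and SS :: "nat set set"
  assumes set_system: "set_system U SS" and embedded: "sqsub (set_system_struct U SS) A"
begin

lemma U_subset: "U \<subseteq> univ A"
  using embedded by (simp add: sqsub_def set_system_struct_def)

lemma interp_A_SET: "interp A SET_sym = {[SetV X] | X. X \<in> SS}"
  using embedded by (simp add: sqsub_def set_system_struct_def)

lemma SET_in_Voc: "SET_sym \<in> Voc"
  using embedded wf_A by (simp add: sqsub_def set_system_struct_def wf_struct_def)

sublocale M: set_system_model p1 p2 p3 rr cc M U SS
  using set_system U_subset univ_M interp_M_Voc[OF SET_in_Voc] interp_A_SET
  by unfold_locales auto

lemma model_marks_by_colouring: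
  assumes "\<forall>a\<in>U. colouring M a = \<kappa> a"
  shows "M.model_marks r X \<longleftrightarrow> r \<in> R \<and> marks SS (unit_labelled \<kappa>) r X"
proof -
  have "unit_labelled (colouring M) Z = unit_labelled \<kappa> Z" if "Z \<in> strong SS" for Z
    using assms strong_subset_univ[OF set_system that] by (simp add: subset_iff)
  then have "marks SS (unit_labelled (colouring M)) r X = marks SS (unit_labelled \<kappa>) r X"
    by (rule marks_cong)
  then show ?thesis
    by (simp add: M.model_marks_def unary_rel_M)
qed

end

locale tau_accepting_run = tau_run_on_input +
  assumes accepts: "sat M (\<lambda>_. 0) (\<lambda>_. {}) FAccept"
begin

lemma unique_marker: "X \<in> strong SS \<Longrightarrow> \<not> is_singleton X \<Longrightarrow> \<exists>!r. M.model_marks r X"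
  using accepts M.sat_FAccept by blast

lemma kept_eq: "kept M = univ A \<union> g ` {r. \<exists>X. M.model_marks r X}"
proof -
  have "a \<in> kept M \<longleftrightarrow> a \<in> univ A \<or> (\<exists>r. a = g r \<and> (\<exists>X. M.model_marks r X))" for a
  proof (cases "a \<in> univ A")
    case True
    then show ?thesis
      using univ_A_kept by blast
  next
    case False
    have "(\<exists>b\<in>univ M. is_copy M b a \<and> (\<exists>X. M.model_marks b X)) \<longleftrightarrow>
        (\<exists>r. a = g r \<and> (\<exists>X. M.model_marks r X))"
    proof
      assume "\<exists>r. a = g r \<and> (\<exists>X. M.model_marks r X)"
      then obtain r X where "a = g r" "M.model_marks r X"
        by blast
      moreover have "r \<in> univ A"
        using M.model_marks_imp(4)[OF \<open>M.model_marks r X\<close>] U_subset by blast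
      ultimately show "\<exists>b\<in>univ M. is_copy M b a \<and> (\<exists>X. M.model_marks b X)"
        using univ_M by (intro bexI[of _ r]) (auto simp: is_copy_M)
    qed (auto simp: is_copy_M)
    note copies = this
    show ?thesis
    proof (cases "a \<in> univ M")
      case True
      then have "\<not> (\<forall>b\<in>univ M. \<not> is_copy M b a)"
        using False univ_M by (auto simp: is_copy_M)
      then show ?thesis
        using True False copies M.sat_FKept[of "\<lambda>_. a"] by (simp add: kept_def) blast
    next
      case notM: False
      then show ?thesis
        using False copies univ_M by (auto simp: kept_def is_copy_M)
    qed
  qed
  then show ?thesis
    by blast
qed

definition node :: "nat set \<Rightarrow> nat" where
  "node X = (if is_singleton X then the_elem X else g (THE r. M.model_marks r X))"

lemma node_singleton [simp]: "node {a} = a"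
  by (simp add: node_def)

lemma node_marked: "M.model_marks r X \<Longrightarrow> node X = g r"
  using unique_marker M.model_marks_imp(1,2) by (simp add: node_def the1_equality)

lemma node_internal:
  assumes "X \<in> strong SS" "\<not> is_singleton X"
  obtains r where "M.model_marks r X" "node X = g r"
  using unique_marker[OF assms] node_marked by blast

lemma node_in_univ_A_iff:
  assumes "X \<in> strong SS"
  shows "node X \<in> univ A \<longleftrightarrow> is_singleton X"
proof (cases "is_singleton X")
  case True
  then show ?thesis
    using strong_subset_univ[OF set_system assms] U_subset by (auto simp: is_singleton_def)
next
  case False
  then obtain r where "M.model_marks r X" "node X = g r"
    using node_internal[OF assms] by blast
  moreover from this have "r \<in> univ A"
    using M.model_marks_imp(4) U_subset by blast
  ultimately show ?thesis
    using False g_fresh by simp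
qed

lemma original_eq_node_iff:
  assumes "a \<in> univ A" "X \<in> strong SS"
  shows "a = node X \<longleftrightarrow> X = {a}"
proof
  assume "a = node X"
  then have "is_singleton X"
    using assms node_in_univ_A_iff by simp
  with \<open>a = node X\<close> show "X = {a}"
    by (auto simp: is_singleton_def)
qed simp

lemma copy_eq_node_iff:
  assumes "b \<in> univ A" "X \<in> strong SS"
  shows "g b = node X \<longleftrightarrow> M.model_marks b X"
proof
  assume *: "g b = node X"
  then have "\<not> is_singleton X"
    using assms node_in_univ_A_iff g_fresh by auto
  then obtain r where "M.model_marks r X" "node X = g r"
    using node_internal assms(2) by blast
  moreover from this have "r = b"
    using * assms(1) g_inj M.model_marks_imp(4) U_subset by (auto dest: inj_onD)
  ultimately show "M.model_marks b X"
    by simp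
qed (simp add: node_marked)

lemma inj_node: "inj_on node (strong SS)"
proof (rule inj_onI)
  fix X Y assume X: "X \<in> strong SS" and Y: "Y \<in> strong SS" and eq: "node X = node Y"
  show "X = Y"
  proof (cases "is_singleton X")
    case True
    then obtain a where "X = {a}"
      by (auto simp: is_singleton_def)
    then have "a \<in> univ A" "a = node Y"
      using eq strong_subset_univ[OF set_system X] U_subset by auto
    then have "Y = {a}"
      using original_eq_node_iff[OF _ Y] by blast
    then show ?thesis
      using \<open>X = {a}\<close> by simp
  next
    case False
    then obtain r where r: "M.model_marks r X" "node X = g r"
      using node_internal X by blast
    then have "M.model_marks r Y"
      using copy_eq_node_iff[of r Y] eq Y M.model_marks_imp(4) U_subset by auto
    then show ?thesis
      using r(1) marks_unique_node unfolding M.model_marks_def by blast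
  qed
qed

lemma kept_eq_nodes: "kept M = univ A \<union> node ` strong SS"
proof -
  have "node ` strong SS = U \<union> g ` {r. \<exists>X. M.model_marks r X}"
  proof (intro equalityI subsetI)
    fix x assume "x \<in> node ` strong SS"
    then obtain X where "X \<in> strong SS" "x = node X"
      by blast
    show "x \<in> U \<union> g ` {r. \<exists>X. M.model_marks r X}"
    proof (cases "is_singleton X")
      case True
      then show ?thesis
        using \<open>x = node X\<close> strong_subset_univ[OF set_system \<open>X \<in> strong SS\<close>]
        by (auto simp: is_singleton_def)
    next
      case False
      then show ?thesis
        using node_internal[OF \<open>X \<in> strong SS\<close>] \<open>x = node X\<close> by blast
    qed
  next
    fix x assume "x \<in> U \<union> g ` {r. \<exists>X. M.model_marks r X}"
    then show "x \<in> node ` strong SS"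
    proof
      assume "x \<in> U"
      then have "{x} \<in> strong SS"
        by (rule singleton_strong[OF set_system])
      moreover have "x = node {x}"
        by simp
      ultimately show ?thesis
        by blast
    next
      assume "x \<in> g ` {r. \<exists>X. M.model_marks r X}"
      then obtain r X where "x = g r" "M.model_marks r X"
        by blast
      then have "x = node X"
        using node_marked by simp
      then show ?thesis
        using M.model_marks_imp(1)[OF \<open>M.model_marks r X\<close>] by blast
    qed
  qed
  then show ?thesis
    unfolding kept_eq using U_subset by auto
qed

lemma strong_subset_kept: "X \<in> strong SS \<Longrightarrow> X \<subseteq> kept M"
  using strong_subset_univ[OF set_system] U_subset univ_A_kept by blast

sublocale D: set_system_model p1 p2 p3 rr cc D U SS
  using set_system U_subset univ_A_kept interp_D_Voc[OF SET_in_Voc] interp_A_SET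
  by unfold_locales (auto simp: restrict_to_simps)

lemma D_model_marks: "D.model_marks = M.model_marks"
proof -
  have "unary_rel D p = unary_rel M p" if "p \<in> {p1, p2, p3, rr}" for p
    using that unary_rel_M colours_subset univ_A_kept by (auto simp: unary_rel_restrict_to)
  then show ?thesis
    by (simp add: fun_eq_iff D.model_marks_def M.model_marks_def colouring_def)
qed

lemma is_copy_D: "is_copy D a b \<longleftrightarrow> a \<in> univ A \<and> b = g a \<and> b \<in> kept M"
  using univ_A_kept by (auto simp: is_copy_restrict_to is_copy_M)

lemma sat_D_FRepresents:
  assumes "u \<noteq> 2" "X < 20" "v u \<in> kept M" "w X \<subseteq> kept M"
  shows "sat D v w (FRepresents u X) \<longleftrightarrow> w X \<in> strong SS \<and> v u = node (w X)"
proof -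
  have sat_eq: "sat D v w (FRepresents u X) \<longleftrightarrow>
      (\<forall>a\<in>kept M. \<not> is_copy D a (v u)) \<and> w X = {v u} \<and> w X \<in> SS \<or>
      (\<exists>a\<in>kept M. is_copy D a (v u) \<and> M.model_marks a (w X))"
    using D.sat_FRepresents[OF assms(1,2)] assms(4) by (simp add: restrict_to_simps D_model_marks)
  show ?thesis
  proof (cases "v u \<in> univ A")
    case True
    then have "\<forall>a\<in>kept M. \<not> is_copy D a (v u)"
      using g_fresh by (auto simp: is_copy_D)
    then have "sat D v w (FRepresents u X) \<longleftrightarrow> w X = {v u} \<and> w X \<in> SS"
      using sat_eq by blast
    also have "\<dots> \<longleftrightarrow> w X \<in> strong SS \<and> w X = {v u}"
      using singleton_strong[OF set_system] set_system strong_subset_members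
      by (auto simp: set_system_def)
    also have "\<dots> \<longleftrightarrow> w X \<in> strong SS \<and> v u = node (w X)"
      using original_eq_node_iff[OF True] by blast
    finally show ?thesis .
  next
    case False
    then obtain b X0 where b: "v u = g b" "M.model_marks b X0"
      using assms(3) kept_eq by blast
    then have "b \<in> univ A"
      using M.model_marks_imp(4) U_subset by blast
    then have "is_copy D a (v u) \<longleftrightarrow> a = b" for a
      using b(1) assms(3) g_inj by (auto simp: is_copy_D dest: inj_onD)
    moreover have "b \<in> kept M"
      using \<open>b \<in> univ A\<close> univ_A_kept by blast
    ultimately have "sat D v w (FRepresents u X) \<longleftrightarrow> M.model_marks b (w X)"
      using sat_eq by simp blast
    also have "\<dots> \<longleftrightarrow> w X \<in> strong SS \<and> v u = node (w X)"
      using copy_eq_node_iff[OF \<open>b \<in> univ A\<close>, of "w X"] b(1) M.model_marks_imp(1)[of b "w X"] by auto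
    finally show ?thesis .
  qed
qed

lemma sat_D_FAncestor:
  assumes "v 0 \<in> kept M" "v 1 \<in> kept M"
  shows "sat D v (\<lambda>_. {}) FAncestor \<longleftrightarrow>
    (\<exists>S0\<in>strong SS. \<exists>S1\<in>strong SS. v 0 = node S0 \<and> v 1 = node S1 \<and> S1 \<subseteq> S0)"
    (is "_ \<longleftrightarrow> ?rhs")
proof -
  let ?w = "\<lambda>S0 S1. (\<lambda>_. {})(0 := S0, 1 := S1)"
  have rep0: "sat D v (?w S0 S1) (FRepresents 0 0) \<longleftrightarrow> S0 \<in> strong SS \<and> v 0 = node S0"
    and rep1: "sat D v (?w S0 S1) (FRepresents 1 1) \<longleftrightarrow> S1 \<in> strong SS \<and> v 1 = node S1"
    if "S0 \<subseteq> kept M" "S1 \<subseteq> kept M" for S0 S1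
    using sat_D_FRepresents[of _ _ v "?w S0 S1"] assms that by simp_all
  have "sat D v (\<lambda>_. {}) FAncestor \<longleftrightarrow> (\<exists>S0. S0 \<subseteq> kept M \<and> (\<exists>S1. S1 \<subseteq> kept M \<and>
      sat D v (?w S0 S1) (FRepresents 0 0) \<and> sat D v (?w S0 S1) (FRepresents 1 1) \<and>
      kept M \<inter> S1 \<subseteq> S0))"
    unfolding FAncestor_def by (simp add: restrict_to_simps)
  also have "\<dots> \<longleftrightarrow> ?rhs"
  proof
    assume "\<exists>S0. S0 \<subseteq> kept M \<and> (\<exists>S1. S1 \<subseteq> kept M \<and>
      sat D v (?w S0 S1) (FRepresents 0 0) \<and> sat D v (?w S0 S1) (FRepresents 1 1) \<and>
      kept M \<inter> S1 \<subseteq> S0)"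
    then obtain S0 S1 where S: "S0 \<subseteq> kept M" "S1 \<subseteq> kept M"
      "sat D v (?w S0 S1) (FRepresents 0 0)" "sat D v (?w S0 S1) (FRepresents 1 1)" "kept M \<inter> S1 \<subseteq> S0"
      by blast
    then show ?rhs
      using rep0[OF S(1,2)] rep1[OF S(1,2)] by blast
  next
    assume ?rhs
    then obtain S0 S1 where S: "S0 \<in> strong SS" "S1 \<in> strong SS" "v 0 = node S0" "v 1 = node S1" "S1 \<subseteq> S0"
      by blast
    have K: "S0 \<subseteq> kept M" "S1 \<subseteq> kept M"
      using S(1,2) strong_subset_kept by blast+
    have "sat D v (?w S0 S1) (FRepresents 0 0)" "sat D v (?w S0 S1) (FRepresents 1 1)"
      using rep0[OF K] rep1[OF K] S(1-4) by simp_all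
    moreover have "kept M \<inter> S1 \<subseteq> S0"
      using S(5) by blast
    ultimately show "\<exists>S0. S0 \<subseteq> kept M \<and> (\<exists>S1. S1 \<subseteq> kept M \<and>
      sat D v (?w S0 S1) (FRepresents 0 0) \<and> sat D v (?w S0 S1) (FRepresents 1 1) \<and>
      kept M \<inter> S1 \<subseteq> S0)"
      using K by blast
  qed
  finally show ?thesis .
qed

definition laminar_tree :: struct where
  "laminar_tree = \<lparr>voc = {ancestor_sym}, univ = node ` strong SS,
     interp = (\<lambda>s. if s = ancestor_sym
       then {[Elt (node X), Elt (node Y)] | X Y. X \<in> strong SS \<and> Y \<in> strong SS \<and> lam_ancestor SS X Y}
       else {})\<rparr>"

lemma represents_laminar_tree: "represents_laminar_tree U SS laminar_tree"
  unfolding represents_laminar_tree_def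
proof (intro conjI)
  show "wf_struct {ancestor_sym} laminar_tree"
    using finite_strong[OF set_system] by (auto simp: wf_struct_def laminar_tree_def ancestor_sym_def)
  show "\<exists>h. bij_betw h (strong SS) (univ laminar_tree) \<and> (\<forall>a\<in>U. h {a} = a) \<and>
      interp laminar_tree ancestor_sym =
        {[Elt (h X), Elt (h Y)] | X Y. X \<in> strong SS \<and> Y \<in> strong SS \<and> lam_ancestor SS X Y}"
    by (intro exI[of _ node]) (simp add: laminar_tree_def inj_on_imp_bij_betw[OF inj_node])
qed

lemma interp_sym_D_FAncestor: "interp_sym D ancestor_sym FAncestor = interp laminar_tree ancestor_sym"
proof (intro equalityI subsetI)
  fix t assume "t \<in> interp_sym D ancestor_sym FAncestor"
  then obtain xs where t: "t = map Elt xs" "length xs = 2" "set xs \<subseteq> kept M"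
      "sat D (\<lambda>i. xs ! i) (\<lambda>_. {}) FAncestor"
    by (auto simp: ancestor_sym_def restrict_to_simps)
  then obtain x0 x1 where "xs = [x0, x1]"
    by (auto simp: length_Suc_conv numeral_2_eq_2)
  with t have "\<exists>S0\<in>strong SS. \<exists>S1\<in>strong SS. x0 = node S0 \<and> x1 = node S1 \<and> S1 \<subseteq> S0"
    using sat_D_FAncestor[of "\<lambda>i. xs ! i"] by simp
  then show "t \<in> interp laminar_tree ancestor_sym"
    using t(1) \<open>xs = [x0, x1]\<close> lam_ancestor_iff_subset[OF set_system] by (auto simp: laminar_tree_def)
next
  fix t assume "t \<in> interp laminar_tree ancestor_sym"
  then obtain X Y where XY: "t = [Elt (node X), Elt (node Y)]" "X \<in> strong SS" "Y \<in> strong SS"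
      "lam_ancestor SS X Y"
    by (auto simp: laminar_tree_def)
  then have "Y \<subseteq> X"
    using lam_ancestor_iff_subset[OF set_system] by blast
  have kept: "node X \<in> kept M" "node Y \<in> kept M"
    using XY(2,3) kept_eq_nodes by auto
  then have "sat D (\<lambda>i. [node X, node Y] ! i) (\<lambda>_. {}) FAncestor"
    using sat_D_FAncestor[of "\<lambda>i. [node X, node Y] ! i"] XY(2,3) \<open>Y \<subseteq> X\<close> by auto
  then show "t \<in> interp_sym D ancestor_sym FAncestor"
    using XY(1) kept by (auto simp: ancestor_sym_def restrict_to_simps intro!: exI[of _ "[node X, node Y]"])
qed

lemma output_eq_join:
  assumes "set vs = Voc" "ancestor_sym \<notin> Voc"
  shows "interp_struct (tau_interps vs) D = join A laminar_tree"
proof (rule struct.equality)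
  have voc_A: "voc A = Voc"
    using wf_A by (simp add: wf_struct_def)
  show "voc (interp_struct (tau_interps vs) D) = voc (join A laminar_tree)"
    using assms voc_A by (simp add: interp_struct_simps tau_interps_def join_def laminar_tree_def)
  show "univ (interp_struct (tau_interps vs) D) = univ (join A laminar_tree)"
    using kept_eq_nodes by (simp add: interp_struct_simps restrict_to_simps join_def laminar_tree_def)
  show "interp (interp_struct (tau_interps vs) D) = interp (join A laminar_tree)"
  proof
    fix s
    consider "s \<in> Voc" | "s = ancestor_sym" | "s \<notin> Voc" "s \<noteq> ancestor_sym"
      by blast
    then show "interp (interp_struct (tau_interps vs) D) s = interp (join A laminar_tree) s"
    proof cases
      case 1
      then have "interp (interp_struct (tau_interps vs) D) s = interp_sym D s (identity_form s)"
        using assms by (simp add: interp_struct_simps map_of_tau_interps)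
      also have "\<dots> = interp A s"
        using interp_sym_identity_form[OF wf_A 1 interp_D_Voc[OF 1]] univ_A_kept by (simp add: restrict_to_simps)
      finally show ?thesis
        using 1 assms voc_A by (auto simp: join_def laminar_tree_def)
    next
      case 2
      then show ?thesis
        using assms voc_A interp_sym_D_FAncestor
        by (simp add: interp_struct_simps map_of_tau_interps join_def laminar_tree_def)
    next
      case 3
      then show ?thesis
        using assms voc_A by (simp add: interp_struct_simps map_of_tau_interps join_def laminar_tree_def)
    qed
  qed
  show "struct.more (interp_struct (tau_interps vs) D) = struct.more (join A laminar_tree)"
    by (simp add: interp_struct_def join_def)
qed

end

lemma ex_fresh_injection:
  assumes "finite S"
  shows "\<exists>g :: nat \<Rightarrow> nat. inj_on g S \<and> (\<forall>a\<in>S. g a \<notin> S)"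
proof -
  define g where "g a = a + Suc (Max (insert 0 S))" for a
  have "g a \<notin> S" for a
  proof
    assume "g a \<in> S"
    then have "g a \<le> Max (insert 0 S)"
      using assms by simp
    then show False
      by (simp add: g_def)
  qed
  moreover have "inj_on g S"
    by (simp add: g_def inj_on_def)
  ultimately show ?thesis
    by blast
qed

lemma ex_fresh_names:
  assumes "finite Voc"
  shows "\<exists>p1 p2 p3 rr cc. fresh_names p1 p2 p3 rr cc Voc"
proof -
  have fresh: "\<exists>x. x \<notin> F" if "finite F" for F :: "string set"
    using ex_new_if_finite[OF infinite_UNIV_listI that] by blast
  let ?N = "(\<lambda>(k, n, a). n) ` Voc"
  have "finite ?N"
    using assms by simp
  obtain p1 where "p1 \<notin> ?N"
    using fresh \<open>finite ?N\<close> by blast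
  obtain p2 where "p2 \<notin> insert p1 ?N"
    using fresh \<open>finite ?N\<close> by (meson finite_insert)
  obtain p3 where "p3 \<notin> insert p2 (insert p1 ?N)"
    using fresh \<open>finite ?N\<close> by (meson finite_insert)
  obtain rr where "rr \<notin> insert p3 (insert p2 (insert p1 ?N))"
    using fresh \<open>finite ?N\<close> by (meson finite_insert)
  obtain cc where "cc \<notin> insert rr (insert p3 (insert p2 (insert p1 ?N)))"
    using fresh \<open>finite ?N\<close> by (meson finite_insert)
  have "fresh_names p1 p2 p3 rr cc Voc"
    by unfold_locales (use \<open>p1 \<notin> ?N\<close> \<open>p2 \<notin> _\<close> \<open>p3 \<notin> _\<close> \<open>rr \<notin> _\<close> \<open>cc \<notin> _\<close> in \<open>force simp: image_iff\<close>)+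
  then show ?thesis
    by blast
qed

context fresh_names
begin

lemma overlay_tau:
  assumes "set vs = Voc"
  shows "overlay Voc (tau (tau_interps vs))"
  unfolding overlay_def trans_sem_def
proof (intro allI impI)
  fix A B assume "wf_struct Voc A \<and> run (tau (tau_interps vs)) A B"
  then obtain C1 C2 C3 R g where run: "tau_run p1 p2 p3 rr cc Voc A C1 C2 C3 R g"
    and B: "B = interp_struct (tau_interps vs) (restrict_to (kept (coloured_copy C1 C2 C3 R g A)) (coloured_copy C1 C2 C3 R g A))"
    unfolding run_tau tau_run_def tau_run_axioms_def using fresh_names_axioms by blast
  show "sqsub A B"
    unfolding B by (rule tau_run.embeds_into_output[OF run assms])
qed

lemma run_tau_output:
  assumes "set vs = Voc" "ancestor_sym \<notin> Voc" "wf_struct Voc A"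
    and "set_system U SS" "sqsub (set_system_struct U SS) A" "run (tau (tau_interps vs)) A B"
  shows "\<exists>T. represents_laminar_tree U SS T \<and> B = join A T"
proof -
  obtain C1 C2 C3 R g where run: "tau_accepting_run p1 p2 p3 rr cc Voc A C1 C2 C3 R g U SS"
    and B: "B = interp_struct (tau_interps vs) (restrict_to (kept (coloured_copy C1 C2 C3 R g A)) (coloured_copy C1 C2 C3 R g A))"
    using assms(3-6) fresh_names_axioms
    unfolding run_tau tau_accepting_run_def tau_accepting_run_axioms_def tau_run_on_input_def
      tau_run_on_input_axioms_def tau_run_def tau_run_axioms_def
    by blast
  show ?thesis
    using tau_accepting_run.represents_laminar_tree[OF run] tau_accepting_run.output_eq_join[OF run assms(1,2)] B
    by blast
qed

lemma ex_run_tau: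
  assumes "wf_struct Voc A" "set_system U SS" "sqsub (set_system_struct U SS) A"
  shows "\<exists>B. run (tau l) A B"
proof -
  have "((1, 0, 0) :: label) \<noteq> 0"
    by (simp add: zero_prod_def)
  then obtain \<kappa> where \<kappa>: "splits_children SS (unit_labelled \<kappa>) U"
    using colouring_exists[OF assms(2) univ_strong[OF assms(2)]] by blast
  obtain R where R: "R \<subseteq> U" "\<forall>X\<in>strong SS. \<not> is_singleton X \<longrightarrow> (\<exists>!r. r \<in> R \<and> marks SS (unit_labelled \<kappa>) r X)"
    using marker_set_exists[OF assms(2) \<kappa>] by blast
  define C1 where "C1 = {a \<in> U. fst (\<kappa> a) = 1}"
  define C2 where "C2 = {a \<in> U. fst (snd (\<kappa> a)) = 1}"
  define C3 where "C3 = {a \<in> U. snd (snd (\<kappa> a)) = 1}"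
  have "finite (univ A)"
    using assms(1) by (simp add: wf_struct_def)
  then obtain g where g: "inj_on g (univ A)" "\<forall>a\<in>univ A. g a \<notin> univ A"
    using ex_fresh_injection by blast
  have "U \<subseteq> univ A"
    using assms(3) by (simp add: sqsub_def set_system_struct_def)
  then have colours: "C1 \<subseteq> univ A" "C2 \<subseteq> univ A" "C3 \<subseteq> univ A" "R \<subseteq> univ A"
    using R(1) by (auto simp: C1_def C2_def C3_def)
  have "tau_run p1 p2 p3 rr cc Voc A C1 C2 C3 R g"
    unfolding tau_run_def tau_run_axioms_def using fresh_names_axioms assms(1) g colours by blast
  then interpret tau_run_on_input p1 p2 p3 rr cc Voc A C1 C2 C3 R g U SS
    using assms(2,3) by (simp add: tau_run_on_input_def tau_run_on_input_axioms_def)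
  have "\<forall>a\<in>U. colouring M a = \<kappa> a"
    unfolding colouring_def unary_rel_M by (auto simp: C1_def C2_def C3_def prod_eq_iff)
  then have "sat M (\<lambda>_. 0) (\<lambda>_. {}) FAccept"
    using R(2) M.sat_FAccept model_marks_by_colouring[of \<kappa>] by simp
  then show ?thesis
    unfolding run_tau using colours g by blast
qed

end

theorem lemma4p1:
  fixes Voc :: "sym set"
  assumes "finite Voc" and "SET_sym \<in> Voc" and "ancestor_sym \<notin> Voc"
  shows "\<exists>\<tau>. wf_trans \<tau> \<and> overlay Voc \<tau> \<and>
    (\<forall>U SS A. set_system U SS \<and> wf_struct Voc A \<and> sqsub (set_system_struct U SS) A \<longrightarrow>
       (\<exists>B. trans_sem Voc \<tau> A B) \<and>
       (\<forall>B. trans_sem Voc \<tau> A B \<longrightarrow>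
          (\<exists>T. represents_laminar_tree U SS T \<and> B = join A T)))"
proof -
  obtain vs where vs: "set vs = Voc" "distinct vs"
    using finite_distinct_list[OF assms(1)] by blast
  obtain p1 p2 p3 rr cc where "fresh_names p1 p2 p3 rr cc Voc"
    using ex_fresh_names[OF assms(1)] by blast
  then interpret fresh_names p1 p2 p3 rr cc Voc .
  show ?thesis
  proof (rule exI, intro conjI allI impI)
    show "wf_trans (tau (tau_interps vs))"
      using wf_tau vs assms(3) by simp
    show "overlay Voc (tau (tau_interps vs))"
      using overlay_tau vs(1) .
    fix U SS A assume input: "set_system U SS \<and> wf_struct Voc A \<and> sqsub (set_system_struct U SS) A"
    then show "\<exists>B. trans_sem Voc (tau (tau_interps vs)) A B"
      using ex_run_tau[of A U SS] unfolding trans_sem_def by blast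
    fix B assume "trans_sem Voc (tau (tau_interps vs)) A B"
    then show "\<exists>T. represents_laminar_tree U SS T \<and> B = join A T"
      using run_tau_output[OF vs(1) assms(3)] input unfolding trans_sem_def by blast
  qed
qed

end
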